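(* For every countable ordinal $\beta\ge1$ and every finite $m\ge1$, $\mathsf{rk}(\mathbb Z\cdot\omega^\beta\cdot m)=\omega\cdot(1+\beta)+\lfloor\log_2 m\rfloor$, where $1+\beta$ denotes ordinal addition with $1$ on the left.
   Context: For an ordinal $\alpha$, $\mathbb Z\cdot\alpha$ denotes the linear order consisting of $\alpha$ consecutive copies of $(\mathbb Z,<)$: the lexicographic order on $\alpha\times\mathbb Z$ comparing first the $\alpha$-coordinate. Let $\mathcal F$ be the class of finite linear orders (language $\{<\}$); countable linear orders are the structures considered; substructures are suborders and $\mathsf{age}(X)$ is the set of finite suborders of $X$. For $A\le B$, $B$ is a prime extension of $A$ if $|B\setminus A|=1$; a realization of $B$ in $X$ (where $A\le X$) is $C\le X$ with $A\le C$ and an order-isomorphism $B\to C$ fixing $A$ pointwise. For $F\in\mathsf{age}(X)$ define by recursion: $\mathsf{rk}_X(F)\ge0$ always; $\mathsf{rk}_X(F)\ge\gamma+1$ iff every prime extension $B\in\mathcal F$ of $F$ has a realization $C$ in $X$ with $\mathsf{rk}_X(C)\ge\gamma$; for limit $\gamma$, $\mathsf{rk}_X(F)\ge\gamma$ iff $\mathsf{rk}_X(F)\ge\delta$ for all $\delta<\gamma$. $\mathsf{rk}_X(F)=\sup\{\gamma:\mathsf{rk}_X(F)\ge\gamma\}$ (or $\infty$ if this holds for all ordinals), and $\mathsf{rk}(X)=\mathsf{rk}_X(\emptyset)$. *)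

theory Defs
  imports Complex_Main "HOL-Library.Countable_Set"
begin

definition strict_linear_on :: "'a set \<Rightarrow> ('a \<Rightarrow> 'a \<Rightarrow> bool) \<Rightarrow> bool" where
  "strict_linear_on A lt \<longleftrightarrow>
     (\<forall>x\<in>A. \<not> lt x x) \<and>
     (\<forall>x\<in>A. \<forall>y\<in>A. \<forall>z\<in>A. lt x y \<longrightarrow> lt y z \<longrightarrow> lt x z) \<and>
     (\<forall>x\<in>A. \<forall>y\<in>A. x \<noteq> y \<longrightarrow> lt x y \<or> lt y x)"

text \<open>age: finite suborders (identified with their carriers, with the induced order).\<close>
definition age :: "'a set \<Rightarrow> 'a set set" where
  "age Xc = {F. F \<subseteq> Xc \<and> finite F}"

definition prime_ext :: "('a \<Rightarrow> 'a \<Rightarrow> bool) \<Rightarrow> 'a set \<Rightarrow> 'a set \<Rightarrow> ('a \<Rightarrow> 'a \<Rightarrow> bool) \<Rightarrow> bool" where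
  "prime_ext lt F Bc ltB \<longleftrightarrow>
     finite Bc \<and> strict_linear_on Bc ltB \<and> F \<subseteq> Bc \<and>
     (\<forall>x\<in>F. \<forall>y\<in>F. ltB x y \<longleftrightarrow> lt x y) \<and> card (Bc - F) = 1"

definition realizes :: "'a set \<Rightarrow> ('a \<Rightarrow> 'a \<Rightarrow> bool) \<Rightarrow> 'a set \<Rightarrow> 'a set \<Rightarrow> ('a \<Rightarrow> 'a \<Rightarrow> bool) \<Rightarrow> 'a set \<Rightarrow> bool" where
  "realizes Xc lt F Bc ltB C \<longleftrightarrow>
     F \<subseteq> C \<and> C \<subseteq> Xc \<and>
     (\<exists>h. bij_betw h Bc C \<and> (\<forall>x\<in>F. h x = x) \<and>
          (\<forall>x\<in>Bc. \<forall>y\<in>Bc. ltB x y \<longleftrightarrow> lt (h x) (h y)))"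

text \<open>Successor step: given the set T of F with rk >= gamma, the set of F with rk >= gamma+1.\<close>
definition ext_step :: "'a set \<Rightarrow> ('a \<Rightarrow> 'a \<Rightarrow> bool) \<Rightarrow> 'a set set \<Rightarrow> 'a set set" where
  "ext_step Xc lt T =
     {F \<in> age Xc. \<forall>Bc ltB. prime_ext lt F Bc ltB \<longrightarrow>
                      (\<exists>C. realizes Xc lt F Bc ltB C \<and> C \<in> T)}"

definition is_pred :: "'o rel \<Rightarrow> 'o \<Rightarrow> 'o \<Rightarrow> bool" where
  "is_pred r b a \<longleftrightarrow> (b, a) \<in> r \<and> b \<noteq> a \<and>
     (\<forall>c. (b, c) \<in> r \<and> (c, a) \<in> r \<longrightarrow> c = b \<or> c = a)"

text \<open>For a point a of the well-order r, rank_levels X r a is the set of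
  F in age X with rk_X(F) >= (order type of the r-predecessors of a).\<close>
definition rank_levels :: "'a set \<Rightarrow> ('a \<Rightarrow> 'a \<Rightarrow> bool) \<Rightarrow> 'o rel \<Rightarrow> 'o \<Rightarrow> 'a set set" where
  "rank_levels Xc lt r = wfrec (r - Id)
     (\<lambda>f a. if (\<exists>b. is_pred r b a) then ext_step Xc lt (f (THE b. is_pred r b a))
            else age Xc \<inter> \<Inter> {f b | b. (b, a) \<in> r - Id})"

text \<open>alpha + k (k extra points on top).\<close>
definition ord_plus_nat :: "'c rel \<Rightarrow> nat \<Rightarrow> ('c + nat) rel" where
  "ord_plus_nat r k =
     {(Inl a, Inl b) | a b. (a, b) \<in> r} \<union>
     {(Inl a, Inr j) | a j. a \<in> Field r \<and> j < k} \<union>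
     {(Inr i, Inr j) | i j. i \<le> j \<and> j < k}"

text \<open>1 + alpha (one point below).\<close>
definition one_plus :: "'c rel \<Rightarrow> 'c option rel" where
  "one_plus r =
     {(None, None)} \<union> {(None, Some b) | b. b \<in> Field r} \<union>
     {(Some a, Some b) | a b. (a, b) \<in> r}"

text \<open>omega * alpha: alpha consecutive copies of omega.\<close>
definition omega_times :: "'c rel \<Rightarrow> ('c \<times> nat) rel" where
  "omega_times r =
     {((a, n), (b, k)) | a b n k. a \<in> Field r \<and> b \<in> Field r \<and>
        (((a, b) \<in> r \<and> a \<noteq> b) \<or> (a = b \<and> n \<le> k))}"

text \<open>alpha * m: m consecutive copies of alpha.\<close>
definition ord_times_nat :: "'c rel \<Rightarrow> nat \<Rightarrow> (nat \<times> 'c) rel" where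
  "ord_times_nat r m =
     {((i, a), (j, b)) | i j a b. i < m \<and> j < m \<and> a \<in> Field r \<and> b \<in> Field r \<and>
        (i < j \<or> (i = j \<and> (a, b) \<in> r))}"

text \<open>omega ^ beta: finitely supported functions Field beta -> nat, compared at the
  beta-largest argument where they differ.\<close>
definition fin_supp :: "'b rel \<Rightarrow> ('b \<Rightarrow> nat) set" where
  "fin_supp r = {f. finite {x. f x \<noteq> 0} \<and> (\<forall>x. x \<notin> Field r \<longrightarrow> f x = 0)}"

definition omega_exp :: "'b rel \<Rightarrow> ('b \<Rightarrow> nat) rel" where
  "omega_exp r =
     {(f, g) | f g. f \<in> fin_supp r \<and> g \<in> fin_supp r \<and>
        (f = g \<or> (\<exists>x\<in>Field r. f x < g x \<and>
                    (\<forall>y\<in>Field r. (x, y) \<in> r \<and> y \<noteq> x \<longrightarrow> f y = g y)))}"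

definition Z_carrier :: "'c rel \<Rightarrow> ('c \<times> int) set" where
  "Z_carrier r = Field r \<times> UNIV"

definition Z_less :: "'c rel \<Rightarrow> ('c \<times> int) \<Rightarrow> ('c \<times> int) \<Rightarrow> bool" where
  "Z_less r p q \<longleftrightarrow>
     ((fst p, fst q) \<in> r \<and> fst p \<noteq> fst q) \<or> (fst p = fst q \<and> snd p < snd q)"

text \<open>rk_X(F) >= gamma, for a well-order gamma: evaluate the recursion at the
  top point of gamma + 1.\<close>
definition rank_ge :: "'a set \<Rightarrow> ('a \<Rightarrow> 'a \<Rightarrow> bool) \<Rightarrow> 'a set \<Rightarrow> 'o rel \<Rightarrow> bool" where
  "rank_ge Xc lt F g \<longleftrightarrow> F \<in> rank_levels Xc lt (ord_plus_nat g 1) (Inr 0)"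

text \<open>rk_X(F) = alpha, i.e. alpha = sup {gamma. rk_X(F) >= gamma}, for a countable
  ordinal alpha; gamma and upper bounds range over countable ordinals (well-orders
  on subsets of nat).  If rk_X(F) is uncountable or infinite this is false.\<close>
definition rank_is :: "'a set \<Rightarrow> ('a \<Rightarrow> 'a \<Rightarrow> bool) \<Rightarrow> 'a set \<Rightarrow> 'o rel \<Rightarrow> bool" where
  "rank_is Xc lt F alpha \<longleftrightarrow>
     (\<forall>g :: nat rel. Well_order g \<longrightarrow> rank_ge Xc lt F g \<longrightarrow> (g, alpha) \<in> ordLeq) \<and>
     (\<forall>d :: nat rel. Well_order d \<longrightarrow>
        (\<forall>g :: nat rel. Well_order g \<longrightarrow> rank_ge Xc lt F g \<longrightarrow> (g, d) \<in> ordLeq) \<longrightarrow> (alpha, d) \<in> ordLeq)"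

definition rank_of_is :: "'a set \<Rightarrow> ('a \<Rightarrow> 'a \<Rightarrow> bool) \<Rightarrow> 'o rel \<Rightarrow> bool" where
  "rank_of_is Xc lt alpha \<longleftrightarrow> rank_is Xc lt {} alpha"

end

theory Submission
  imports Defs
begin

text \<open>Let \<open>X = \<int> \<cdot> \<omega>\<^sup>\<beta> \<cdot> m\<close>. A prime extension of a finite \<open>F \<subseteq> X\<close> is determined, up to
  realization, by the gap of \<open>F\<close> (a pair of neighbours in \<open>F \<union> {-\<infinity>, +\<infinity>}\<close>) that receives the
  new point. Hence \<open>rk\<^sub>X(F) \<ge> \<gamma> + 1\<close> iff every gap of \<open>F\<close> contains a point \<open>c\<close> with
  \<open>rk\<^sub>X(F \<union> {c}) \<ge> \<gamma>\<close>; so if an ordinal-valued \<open>V\<close> on gaps obeys the splitting law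
  \<open>u < V(a, b) \<longleftrightarrow> (\<exists>c \<in> (a, b). u \<le> V(a, c) \<and> u \<le> V(c, b))\<close>, then \<open>rk\<^sub>X(F) \<ge> w\<close> iff
  \<open>w \<le> V(g)\<close> for every gap \<open>g\<close> of \<open>F\<close>.

  Write a point of \<open>X\<close> as an integer vector indexed by the levels \<open>Low < x < High\<close> (\<open>x \<in> \<beta>\<close>):
  its \<open>\<int>\<close>-coordinate, its Cantor normal form coefficients and its copy index; two points
  compare at the highest level where they differ. If the endpoints of a gap first differ at
  level \<open>L\<close>, by \<open>d\<close>, let \<open>V = \<omega> \<cdot> \<lambda>(L) + \<lfloor>log\<^sub>2 d\<rfloor>\<close> with \<open>\<lambda>(Low) = 0\<close>, \<open>\<lambda>(x) = 1 + x\<close>,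
  \<open>\<lambda>(High) = 1 + \<beta>\<close>. The splitting law holds because splitting \<open>d = d\<^sub>1 + d\<^sub>2\<close> at level \<open>L\<close>
  gives \<open>min \<lfloor>log\<^sub>2 d\<^sub>1\<rfloor> \<lfloor>log\<^sub>2 d\<^sub>2\<rfloor> < \<lfloor>log\<^sub>2 d\<rfloor>\<close>, every smaller value being attained, and
  splitting at a lower level attains every smaller level. The only gap of \<open>\<emptyset>\<close> is
  \<open>(-\<infinity>, +\<infinity>)\<close>, whose endpoints differ by \<open>m\<close> at level \<open>High\<close>; hence
  \<open>rk(X) = \<omega> \<cdot> (1 + \<beta>) + \<lfloor>log\<^sub>2 m\<rfloor>\<close>.\<close>

section \<open>Rank levels along a well-order\<close>

lemma Well_order_refl: "Well_order r \<Longrightarrow> x \<in> Field r \<Longrightarrow> (x, x) \<in> r"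
  by (rule refl_onD[OF wo_rel.REFL[unfolded wo_rel_def]])

lemma Well_order_trans: "Well_order r \<Longrightarrow> (x, y) \<in> r \<Longrightarrow> (y, z) \<in> r \<Longrightarrow> (x, z) \<in> r"
  by (rule transD[OF wo_rel.TRANS[unfolded wo_rel_def]])

lemma Well_order_antisym: "Well_order r \<Longrightarrow> (x, y) \<in> r \<Longrightarrow> (y, x) \<in> r \<Longrightarrow> x = y"
  by (rule antisymD[OF wo_rel.ANTISYM[unfolded wo_rel_def]])

lemma Well_order_total:
  "Well_order r \<Longrightarrow> x \<in> Field r \<Longrightarrow> y \<in> Field r \<Longrightarrow> (x, y) \<in> r \<or> (y, x) \<in> r"
  using wo_rel.TOTALS[unfolded wo_rel_def] by blast

lemma Well_order_wf: "Well_order r \<Longrightarrow> wf (r - Id)"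
  by (rule wo_rel.WF[unfolded wo_rel_def])

lemma is_pred_unique:
  assumes "Well_order r" "is_pred r b a" "is_pred r c a"
  shows "b = c"
  using assms Well_order_total[OF assms(1), of b c] unfolding is_pred_def by (metis FieldI1)

lemma the_is_pred: "Well_order r \<Longrightarrow> is_pred r b a \<Longrightarrow> (THE b. is_pred r b a) = b"
  by (blast intro: is_pred_unique)

lemma is_pred_less_iff:
  assumes "Well_order r" "is_pred r b a" "x \<in> Field r"
  shows "(a, x) \<in> r \<longleftrightarrow> (b, x) \<in> r \<and> b \<noteq> x"
  using assms Well_order_total[OF assms(1), of a x] Well_order_refl[OF assms(1), of x]
    Well_order_trans[OF assms(1), of b a x] Well_order_antisym[OF assms(1), of a b]
  unfolding is_pred_def by (metis FieldI2)

lemma Well_order_succ_exists: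
  assumes w: "Well_order r" and ac: "(a, c) \<in> r" "a \<noteq> c"
  obtains s where "is_pred r a s" "(s, c) \<in> r"
proof -
  let ?Q = "{y. (a, y) \<in> r \<and> y \<noteq> a}"
  obtain s where s: "s \<in> ?Q" and smin: "\<And>y. (y, s) \<in> r - Id \<Longrightarrow> y \<notin> ?Q"
    using wfE_min[OF Well_order_wf[OF w], of c ?Q] ac by blast
  have below: "(s, y) \<in> r" if "y \<in> ?Q" for y
    using that s smin[of y] Well_order_total[OF w, of s y] Well_order_refl[OF w, of s]
    by (auto intro: FieldI2)
  have "is_pred r a s"
    unfolding is_pred_def using s below Well_order_antisym[OF w] by blast
  with below[of c] ac show thesis by (intro that) auto
qed

lemma Well_order_limit_le:
  assumes w: "Well_order r" and np: "\<not> (\<exists>b. is_pred r b a)" and "a \<in> Field r" "x \<in> Field r"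
    and below: "\<And>v. (v, a) \<in> r - Id \<Longrightarrow> (v, x) \<in> r"
  shows "(a, x) \<in> r"
proof (rule ccontr)
  assume "(a, x) \<notin> r"
  then have "(x, a) \<in> r" "x \<noteq> a"
    using assms Well_order_total[OF w] Well_order_refl[OF w] by blast+
  then obtain s where s: "is_pred r x s" "(s, a) \<in> r" by (rule Well_order_succ_exists[OF w])
  with np below[of s] show False
    using Well_order_antisym[OF w] unfolding is_pred_def by blast
qed

lemma rank_levels_unfold:
  assumes "Well_order r"
  shows "rank_levels Xc lt r a =
    (if \<exists>b. is_pred r b a then ext_step Xc lt (rank_levels Xc lt r (THE b. is_pred r b a))
     else age Xc \<inter> \<Inter> {rank_levels Xc lt r b | b. (b, a) \<in> r - Id})"
    (is "_ = ?H (rank_levels Xc lt r) a")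
proof -
  have "rank_levels Xc lt r = wfrec (r - Id) ?H"
    unfolding rank_levels_def ..
  then have "rank_levels Xc lt r a = ?H (cut (rank_levels Xc lt r) (r - Id) a) a"
    by (simp only: wfrec[OF Well_order_wf[OF assms]])
  also have "\<dots> = ?H (rank_levels Xc lt r) a"
  proof (cases "\<exists>b. is_pred r b a")
    case True
    then obtain b where b: "is_pred r b a" ..
    then have "(b, a) \<in> r - Id" unfolding is_pred_def by blast
    with b True show ?thesis by (simp only: if_True the_is_pred[OF assms] cut_apply)
  next
    case False
    have "{cut (rank_levels Xc lt r) (r - Id) a b | b. (b, a) \<in> r - Id} =
        {rank_levels Xc lt r b | b. (b, a) \<in> r - Id}"
      by (metis (lifting) cut_apply)
    with False show ?thesis by (simp only: if_False)
  qed
  finally show ?thesis .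
qed

lemma rank_levels_pred:
  "Well_order r \<Longrightarrow> is_pred r b a \<Longrightarrow> rank_levels Xc lt r a = ext_step Xc lt (rank_levels Xc lt r b)"
  by (subst rank_levels_unfold) (auto simp: the_is_pred)

lemma rank_levels_limit:
  "Well_order r \<Longrightarrow> \<not> (\<exists>b. is_pred r b a) \<Longrightarrow>
    rank_levels Xc lt r a = age Xc \<inter> \<Inter> {rank_levels Xc lt r b | b. (b, a) \<in> r - Id}"
  by (subst rank_levels_unfold) auto

lemma ext_step_mono: "T \<subseteq> T' \<Longrightarrow> ext_step Xc lt T \<subseteq> ext_step Xc lt T'"
  unfolding ext_step_def by blast

lemma ext_step_subset_age: "ext_step Xc lt T \<subseteq> age Xc"
  unfolding ext_step_def by blast

lemma ext_step_rank_levels_subset: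
  assumes w: "Well_order r"
  shows "ext_step Xc lt (rank_levels Xc lt r a) \<subseteq> rank_levels Xc lt r a"
  using Well_order_wf[OF w]
proof (induction a rule: wf_induct_rule)
  case (less a)
  show ?case
  proof (cases "\<exists>b. is_pred r b a")
    case True
    then obtain b where b: "is_pred r b a" by blast
    then have "(b, a) \<in> r - Id" unfolding is_pred_def by blast
    with b less.IH show ?thesis
      by (simp add: rank_levels_pred[OF w] ext_step_mono)
  next
    case False
    have "ext_step Xc lt (rank_levels Xc lt r a) \<subseteq> rank_levels Xc lt r b" if "(b, a) \<in> r - Id" for b
      using ext_step_mono[of "rank_levels Xc lt r a" "rank_levels Xc lt r b"] less.IH[OF that] that
      unfolding rank_levels_limit[OF w False] by blast
    then show ?thesis
      using ext_step_subset_age unfolding rank_levels_limit[OF w False, of Xc lt] by blast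
  qed
qed

lemma rank_levels_antimono:
  assumes w: "Well_order r" and "(a, b) \<in> r"
  shows "rank_levels Xc lt r b \<subseteq> rank_levels Xc lt r a"
  using Well_order_wf[OF w] assms(2)
proof (induction b arbitrary: a rule: wf_induct_rule)
  case (less b)
  show ?case
  proof (cases "a = b")
    case False
    show ?thesis
    proof (cases "\<exists>c. is_pred r c b")
      case True
      then obtain c where c: "is_pred r c b" by blast
      have "(c, b) \<in> r - Id" using c unfolding is_pred_def by blast
      moreover have "(a, c) \<in> r"
        using Well_order_total[OF w, of a c] Well_order_refl[OF w, of a] \<open>a \<noteq> b\<close> less.prems c
        unfolding is_pred_def by (blast intro: FieldI1)
      ultimately show ?thesis
        using less.IH ext_step_rank_levels_subset[OF w] rank_levels_pred[OF w c] by blast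
    next
      case False
      with \<open>a \<noteq> b\<close> less.prems show ?thesis
        unfolding rank_levels_limit[OF w False] by blast
    qed
  qed simp
qed

lemma Well_orderI:
  assumes "\<And>x. x \<in> Field r \<Longrightarrow> (x, x) \<in> r"
    and "\<And>x y z. (x, y) \<in> r \<Longrightarrow> (y, z) \<in> r \<Longrightarrow> (x, z) \<in> r"
    and "\<And>x y. (x, y) \<in> r \<Longrightarrow> (y, x) \<in> r \<Longrightarrow> x = y"
    and "\<And>x y. x \<in> Field r \<Longrightarrow> y \<in> Field r \<Longrightarrow> (x, y) \<in> r \<or> (y, x) \<in> r"
    and "wf (r - Id)"
  shows "Well_order r"
  using assms unfolding order_on_defs refl_on_def trans_def antisym_def total_on_def
  by (auto intro: FieldI1 FieldI2)

lemma one_plus_simps [simp]: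
  "(None, None) \<in> one_plus r"
  "(None, Some b) \<in> one_plus r \<longleftrightarrow> b \<in> Field r"
  "(Some a, None) \<notin> one_plus r"
  "(Some a, Some b) \<in> one_plus r \<longleftrightarrow> (a, b) \<in> r"
  unfolding one_plus_def by simp_all

lemma Field_one_plus: "Field (one_plus r) = insert None (Some ` Field r)"
proof -
  have "insert None (Some ` Field r) \<subseteq> Field (one_plus r)"
    using FieldI1[of None None "one_plus r"] FieldI2[of None _ "one_plus r"] by auto
  moreover have "Field (one_plus r) \<subseteq> insert None (Some ` Field r)"
    unfolding one_plus_def Field_def by auto
  ultimately show ?thesis by blast
qed

lemma Well_order_one_plus:
  assumes w: "Well_order r"
  shows "Well_order (one_plus r)"
proof (rule Well_orderI)
  show "wf (one_plus r - Id)"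
  proof (rule wf_subset)
    let ?f = "\<lambda>x. case x of None \<Rightarrow> (0::nat, undefined) | Some a \<Rightarrow> (1, a)"
    show "wf (inv_image (less_than <*lex*> (r - Id)) ?f)"
      by (intro wf_inv_image wf_lex_prod wf_less_than Well_order_wf[OF w])
    show "one_plus r - Id \<subseteq> inv_image (less_than <*lex*> (r - Id)) ?f"
      by (auto simp: one_plus_def)
  qed
next
  fix x y z assume "(x, y) \<in> one_plus r" "(y, z) \<in> one_plus r"
  then show "(x, z) \<in> one_plus r"
    by (cases x; cases y; cases z) (auto intro: Well_order_trans[OF w] FieldI2)
next
  fix x y assume "(x, y) \<in> one_plus r" "(y, x) \<in> one_plus r"
  then show "x = y" by (cases x; cases y) (auto intro: Well_order_antisym[OF w])
qed (auto simp: Field_one_plus intro: Well_order_refl[OF w] dest: Well_order_total[OF w])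

lemma omega_times_iff [simp]:
  "((a, n), (b, k)) \<in> omega_times r \<longleftrightarrow>
    a \<in> Field r \<and> b \<in> Field r \<and> (((a, b) \<in> r \<and> a \<noteq> b) \<or> (a = b \<and> n \<le> k))"
  unfolding omega_times_def by simp

lemma Field_omega_times: "Field (omega_times r) = Field r \<times> UNIV"
proof -
  have "Field r \<times> UNIV \<subseteq> Field (omega_times r)"
    using FieldI1[of _ _ "omega_times r"] by force
  moreover have "Field (omega_times r) \<subseteq> Field r \<times> UNIV"
    unfolding omega_times_def Field_def by auto
  ultimately show ?thesis by blast
qed

lemma Well_order_omega_times:
  assumes w: "Well_order r"
  shows "Well_order (omega_times r)"
proof (rule Well_orderI)
  show "wf (omega_times r - Id)"
  proof (rule wf_subset)
    show "wf ((r - Id) <*lex*> less_than)"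
      by (intro wf_lex_prod wf_less_than Well_order_wf[OF w])
    show "omega_times r - Id \<subseteq> (r - Id) <*lex*> less_than"
      by (auto simp: omega_times_def)
  qed
next
  fix x y z assume "(x, y) \<in> omega_times r" "(y, z) \<in> omega_times r"
  then show "(x, z) \<in> omega_times r"
    by (cases x; cases y; cases z)
      (auto dest: Well_order_antisym[OF w] intro: Well_order_trans[OF w])
qed (auto simp: Field_omega_times dest: Well_order_antisym[OF w] Well_order_total[OF w])

lemma ord_plus_nat_simps [simp]:
  "(Inl a, Inl b) \<in> ord_plus_nat r k \<longleftrightarrow> (a, b) \<in> r"
  "(Inl a, Inr j) \<in> ord_plus_nat r k \<longleftrightarrow> a \<in> Field r \<and> j < k"
  "(Inr i, Inl b) \<notin> ord_plus_nat r k"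
  "(Inr i, Inr j) \<in> ord_plus_nat r k \<longleftrightarrow> i \<le> j \<and> j < k"
  unfolding ord_plus_nat_def by simp_all

lemma Field_ord_plus_nat:
  assumes "Well_order r"
  shows "Field (ord_plus_nat r k) = Inl ` Field r \<union> Inr ` {..<k}"
proof -
  have "Inl a \<in> Field (ord_plus_nat r k)" if "a \<in> Field r" for a
    using FieldI1[of "Inl a" "Inl a" "ord_plus_nat r k"] Well_order_refl[OF assms that] by simp
  moreover have "Inr j \<in> Field (ord_plus_nat r k)" if "j < k" for j
    using FieldI1[of "Inr j" "Inr j" "ord_plus_nat r k"] that by simp
  ultimately have "Inl ` Field r \<union> Inr ` {..<k} \<subseteq> Field (ord_plus_nat r k)" by blast
  moreover have "Field (ord_plus_nat r k) \<subseteq> Inl ` Field r \<union> Inr ` {..<k}"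
    unfolding ord_plus_nat_def Field_def by auto
  ultimately show ?thesis by blast
qed

lemma Well_order_ord_plus_nat:
  assumes w: "Well_order r"
  shows "Well_order (ord_plus_nat r k)"
proof (rule Well_orderI)
  show "wf (ord_plus_nat r k - Id)"
  proof (rule wf_subset)
    let ?f = "\<lambda>x. (case x of Inl a \<Rightarrow> 0::nat | Inr j \<Rightarrow> Suc j,
      case x of Inl a \<Rightarrow> a | Inr j \<Rightarrow> undefined)"
    show "wf (inv_image (less_than <*lex*> (r - Id)) ?f)"
      by (intro wf_inv_image wf_lex_prod wf_less_than Well_order_wf[OF w])
    show "ord_plus_nat r k - Id \<subseteq> inv_image (less_than <*lex*> (r - Id)) ?f"
      by (auto simp: ord_plus_nat_def)
  qed
next
  fix x y z assume "(x, y) \<in> ord_plus_nat r k" "(y, z) \<in> ord_plus_nat r k"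
  then show "(x, z) \<in> ord_plus_nat r k"
    by (cases x; cases y; cases z) (auto intro: Well_order_trans[OF w] FieldI1)
next
  fix x y assume "(x, y) \<in> ord_plus_nat r k" "(y, x) \<in> ord_plus_nat r k"
  then show "x = y"
    by (cases x; cases y) (auto intro: Well_order_antisym[OF w])
qed (auto simp: Field_ord_plus_nat[OF w] intro: Well_order_refl[OF w] dest: Well_order_total[OF w])

lemma underS_ord_plus_nat_Inl:
  "underS (ord_plus_nat r k) (Inl a) = Inl ` underS r a"
proof (rule set_eqI)
  show "x \<in> underS (ord_plus_nat r k) (Inl a) \<longleftrightarrow> x \<in> Inl ` underS r a" for x
    by (cases x) (auto simp: underS_def)
qed

lemma underS_ord_plus_nat_Inr:
  assumes "Well_order r" "j < k"
  shows "underS (ord_plus_nat r k) (Inr j) = Inl ` Field r \<union> Inr ` {..<j}"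
proof (rule set_eqI)
  show "x \<in> underS (ord_plus_nat r k) (Inr j) \<longleftrightarrow> x \<in> Inl ` Field r \<union> Inr ` {..<j}" for x
    using assms by (cases x) (auto simp: underS_def)
qed

lemma Restr_ord_plus_nat_underS:
  assumes "Well_order r" "j < k"
  shows "Restr (ord_plus_nat r k) (underS (ord_plus_nat r k) (Inr j)) = ord_plus_nat r j"
proof (rule set_eqI)
  show "p \<in> Restr (ord_plus_nat r k) (underS (ord_plus_nat r k) (Inr j))
    \<longleftrightarrow> p \<in> ord_plus_nat r j" for p
    using assms unfolding underS_ord_plus_nat_Inr[OF assms]
    by (cases p; rename_tac x y; case_tac x; case_tac y) (auto intro: FieldI1 FieldI2)
qed

lemma is_pred_ord_plus_nat_Inr:
  assumes "Suc j < k"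
  shows "is_pred (ord_plus_nat r k) (Inr j) (Inr (Suc j))"
proof -
  have "c = Inr j \<or> c = Inr (Suc j)"
    if "(Inr j, c) \<in> ord_plus_nat r k" "(c, Inr (Suc j)) \<in> ord_plus_nat r k" for c
    using that by (cases c) auto
  with assms show ?thesis unfolding is_pred_def by auto
qed

lemma countable_Field_ord_plus_nat_omega_times_one_plus:
  assumes "Well_order r" "countable (Field r)"
  shows "countable (Field (ord_plus_nat (omega_times (one_plus r)) k))"
proof -
  have "Well_order (omega_times (one_plus r))"
    by (simp add: Well_order_omega_times Well_order_one_plus assms(1))
  with assms(2) show ?thesis
    by (simp add: Field_ord_plus_nat Field_omega_times Field_one_plus)
qed

section \<open>Rank levels depend only on the order type\<close>

context
  fixes r :: "'o rel" and s :: "'p rel" and A :: "'o set" and f :: "'o \<Rightarrow> 'p"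
  assumes down: "\<And>x y. x \<in> A \<Longrightarrow> (y, x) \<in> r \<Longrightarrow> y \<in> A"
    and inj: "inj_on f A"
    and down_image: "\<And>x y. x \<in> A \<Longrightarrow> (y, f x) \<in> s \<Longrightarrow> y \<in> f ` A"
    and ord: "\<And>x y. x \<in> A \<Longrightarrow> y \<in> A \<Longrightarrow> (x, y) \<in> r \<longleftrightarrow> (f x, f y) \<in> s"
begin

lemma is_pred_transfer:
  assumes a: "a \<in> A" and b: "b \<in> A"
  shows "is_pred r b a \<longleftrightarrow> is_pred s (f b) (f a)"
proof
  assume p: "is_pred r b a"
  show "is_pred s (f b) (f a)"
    unfolding is_pred_def
  proof (intro conjI allI impI)
    show "(f b, f a) \<in> s" "f b \<noteq> f a"
      using p ord[OF b a] inj_onD[OF inj _ b a] unfolding is_pred_def by auto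
    fix c' assume c': "(f b, c') \<in> s \<and> (c', f a) \<in> s"
    then obtain c where c: "c \<in> A" "c' = f c" using down_image[OF a] by blast
    with c' ord[OF b c(1)] ord[OF c(1) a] p show "c' = f b \<or> c' = f a"
      unfolding is_pred_def by blast
  qed
next
  assume p: "is_pred s (f b) (f a)"
  show "is_pred r b a"
    unfolding is_pred_def
  proof (intro conjI allI impI)
    show "(b, a) \<in> r" "b \<noteq> a"
      using p ord[OF b a] unfolding is_pred_def by auto
    fix c assume c: "(b, c) \<in> r \<and> (c, a) \<in> r"
    then have "c \<in> A" using down[OF a] by blast
    with c p ord[OF b] ord[OF _ a] inj_onD[OF inj] a b show "c = b \<or> c = a"
      unfolding is_pred_def by metis
  qed
qed

lemma rank_levels_transfer:
  assumes wr: "Well_order r" and ws: "Well_order s" and "a \<in> A"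
  shows "rank_levels Xc lt r a = rank_levels Xc lt s (f a)"
  using Well_order_wf[OF wr] \<open>a \<in> A\<close>
proof (induction a rule: wf_induct_rule)
  case (less a)
  show ?case
  proof (cases "\<exists>b. is_pred r b a")
    case True
    then obtain b where b: "is_pred r b a" by blast
    then have "b \<in> A" "(b, a) \<in> r - Id"
      using down[OF less.prems] unfolding is_pred_def by blast+
    moreover have "is_pred s (f b) (f a)"
      using b is_pred_transfer[OF less.prems \<open>b \<in> A\<close>] by blast
    ultimately show ?thesis
      using less.IH by (simp add: rank_levels_pred[OF wr b] rank_levels_pred[OF ws])
  next
    case False
    have not_pred: "\<not> (\<exists>b'. is_pred s b' (f a))"
    proof
      assume "\<exists>b'. is_pred s b' (f a)"
      then obtain b' where b': "is_pred s b' (f a)" by blast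
      then obtain b where "b \<in> A" "b' = f b"
        using down_image[OF less.prems] unfolding is_pred_def by blast
      with b' False is_pred_transfer[OF less.prems] show False by blast
    qed
    have below: "(b', f a) \<in> s - Id \<longleftrightarrow> (\<exists>b. b' = f b \<and> (b, a) \<in> r - Id)" for b'
    proof
      assume "(b', f a) \<in> s - Id"
      with down_image[OF less.prems] ord[OF _ less.prems] show "\<exists>b. b' = f b \<and> (b, a) \<in> r - Id"
        by fastforce
    next
      assume "\<exists>b. b' = f b \<and> (b, a) \<in> r - Id"
      then obtain b where b: "b' = f b" "(b, a) \<in> r" "b \<noteq> a" by blast
      then have "b \<in> A" using down[OF less.prems] by blast
      with b ord[OF _ less.prems] inj_onD[OF inj _ _ less.prems] show "(b', f a) \<in> s - Id"
        by auto
    qed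
    have "{rank_levels Xc lt r b | b. (b, a) \<in> r - Id} =
        {rank_levels Xc lt s b' | b'. (b', f a) \<in> s - Id}"
      unfolding below using less.IH down[OF less.prems] by blast
    then show ?thesis
      unfolding rank_levels_limit[OF wr False] rank_levels_limit[OF ws not_pred] by simp
  qed
qed

end

lemma rank_levels_iso_underS:
  assumes wr: "Well_order r" and ws: "Well_order s" and a: "a \<in> Field r" and b: "b \<in> Field s"
    and h: "bij_betw h (underS r a) (underS s b)"
    and ord: "\<And>x y. x \<in> underS r a \<Longrightarrow> y \<in> underS r a \<Longrightarrow> (x, y) \<in> r \<longleftrightarrow> (h x, h y) \<in> s"
  shows "rank_levels Xc lt r a = rank_levels Xc lt s b"
proof -
  let ?f = "h(a := b)"
  have under_r: "under r a = insert a (underS r a)" and under_s: "under s b = insert b (underS s b)"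
    using Well_order_refl[OF wr a] Well_order_refl[OF ws b] by (auto simp: under_def underS_def)
  have a_notin: "a \<notin> underS r a" and b_notin: "b \<notin> underS s b"
    by (simp_all add: underS_def)
  have image: "?f ` under r a = under s b"
    using h a_notin unfolding under_r under_s bij_betw_def by auto
  have "rank_levels Xc lt r a = rank_levels Xc lt s (?f a)"
  proof (rule rank_levels_transfer[where A = "under r a" and f = ?f, OF _ _ _ _ wr ws])
    show "y \<in> under r a" if "x \<in> under r a" "(y, x) \<in> r" for x y
      using that Well_order_trans[OF wr] by (auto simp: under_def)
    show "inj_on ?f (under r a)"
      using h a_notin b_notin unfolding under_r bij_betw_def inj_on_def by auto
    show "y \<in> ?f ` under r a" if "x \<in> under r a" "(y, ?f x) \<in> s" for x y
    proof -
      have "(?f x, b) \<in> s" using image that(1) by (auto simp: under_def)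
      then have "y \<in> under s b" using that(2) Well_order_trans[OF ws] by (auto simp: under_def)
      then show ?thesis using image by blast
    qed
    show "(x, y) \<in> r \<longleftrightarrow> (?f x, ?f y) \<in> s" if "x \<in> under r a" "y \<in> under r a" for x y
    proof -
      have "(h y, b) \<in> s \<and> h y \<noteq> b" "(y, a) \<in> r \<and> y \<noteq> a" if "y \<in> underS r a" for y
        using that h bij_betw_apply[OF h] unfolding underS_def by auto
      with that ord a_notin Well_order_refl[OF wr a] Well_order_refl[OF ws b] show ?thesis
        unfolding under_r
        by (cases "x = a"; cases "y = a")
          (auto dest: Well_order_antisym[OF wr] Well_order_antisym[OF ws])
    qed
  qed (simp add: under_def Well_order_refl[OF wr a])
  then show ?thesis by simp
qed

lemma Field_Restr_underS: "Well_order r \<Longrightarrow> Field (Restr r (underS r t)) = underS r t"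
  by (rule Refl_Field_Restr2[OF wo_rel.REFL[unfolded wo_rel_def] Order_Relation.underS_Field])

lemma rank_ge_imp_ordLeq_underS:
  assumes W: "Well_order W" and t: "is_pred W t t'" and out: "F \<notin> rank_levels Xc lt W t'"
    and g: "Well_order g" and ge: "rank_ge Xc lt F g"
  shows "(g, Restr W (underS W t)) \<in> ordLeq"
proof (rule ccontr)
  let ?\<alpha> = "Restr W (underS W t)" and ?g1 = "ord_plus_nat g 1"
  have w\<alpha>: "Well_order ?\<alpha>" and wg1: "Well_order ?g1"
    using Well_order_Restr[OF W] Well_order_ord_plus_nat[OF g] .
  assume "(g, ?\<alpha>) \<notin> ordLeq"
  then have "(?\<alpha>, g) \<in> ordLess" using not_ordLeq_iff_ordLess[OF w\<alpha> g] by blast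
  then obtain a h where a: "a \<in> Field g" and "iso ?\<alpha> (Restr g (underS g a)) h"
    using ordLess_iff_ordIso_Restr[OF g w\<alpha>] unfolding ordIso_def by blast
  then have h: "bij_betw h (underS W t) (underS g a)"
    and h_ord: "\<And>x y. x \<in> underS W t \<Longrightarrow> y \<in> underS W t \<Longrightarrow> (x, y) \<in> W \<longleftrightarrow> (h x, h y) \<in> g"
    unfolding iso_iff2 Field_Restr_underS[OF W] Field_Restr_underS[OF g]
    using bij_betw_apply by (fastforce simp: underS_def)+
  have tW: "t \<in> Field W" using t unfolding is_pred_def by (blast intro: FieldI1)
  have "rank_levels Xc lt W t = rank_levels Xc lt ?g1 (Inl a)"
  proof (rule rank_levels_iso_underS[OF W wg1 tW])
    show "Inl a \<in> Field ?g1" using a by (simp add: Field_ord_plus_nat[OF g])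
    show "bij_betw (Inl \<circ> h) (underS W t) (underS ?g1 (Inl a))"
      unfolding underS_ord_plus_nat_Inl using h by (rule bij_betw_trans) (simp add: bij_betw_def)
    show "(x, y) \<in> W \<longleftrightarrow> ((Inl \<circ> h) x, (Inl \<circ> h) y) \<in> ?g1"
      if "x \<in> underS W t" "y \<in> underS W t" for x y
      using h_ord[OF that] by simp
  qed
  moreover have "(Inl a, Inr 0) \<in> ?g1" "Inl a \<noteq> (Inr 0 :: _ + nat)" using a by simp_all
  then obtain s where s: "is_pred ?g1 (Inl a) s" "(s, Inr 0) \<in> ?g1"
    by (rule Well_order_succ_exists[OF wg1])
  have "F \<in> rank_levels Xc lt ?g1 s"
    using ge rank_levels_antimono[OF wg1 s(2)] unfolding rank_ge_def by blast
  ultimately have "F \<in> rank_levels Xc lt W t'"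
    unfolding rank_levels_pred[OF wg1 s(1)] rank_levels_pred[OF W t] by simp
  with out show False ..
qed

lemma rank_ge_ordIso_underS:
  assumes W: "Well_order W" and tW: "t \<in> Field W" and c: "countable (underS W t)"
    and F: "F \<in> rank_levels Xc lt W t"
  obtains g :: "nat rel"
  where "Well_order g" "(Restr W (underS W t), g) \<in> ordIso" "rank_ge Xc lt F g"
proof -
  let ?\<alpha> = "Restr W (underS W t)"
  define e where "e = to_nat_on (underS W t)"
  have w\<alpha>: "Well_order ?\<alpha>" using Well_order_Restr[OF W] .
  have e: "inj_on e (Field ?\<alpha>)"
    unfolding Field_Restr_underS[OF W] e_def using c by (rule inj_on_to_nat_on)
  define g where "g = dir_image ?\<alpha> e"
  have g: "Well_order g" and \<alpha>g: "(?\<alpha>, g) \<in> ordIso"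
    unfolding g_def using Well_order_dir_image[OF w\<alpha> e] dir_image_ordIso[OF w\<alpha> e] .
  have "iso ?\<alpha> g e" unfolding g_def using dir_image_iso[OF w\<alpha> e] .
  then have e_bij: "bij_betw e (underS W t) (Field g)"
    and e_ord: "\<And>x y. x \<in> underS W t \<Longrightarrow> y \<in> underS W t \<Longrightarrow> (x, y) \<in> W \<longleftrightarrow> (e x, e y) \<in> g"
    unfolding iso_iff2 Field_Restr_underS[OF W] by (auto simp: underS_def)
  let ?g1 = "ord_plus_nat g 1"
  have wg1: "Well_order ?g1" using Well_order_ord_plus_nat[OF g] .
  have "rank_levels Xc lt W t = rank_levels Xc lt ?g1 (Inr 0)"
  proof (rule rank_levels_iso_underS[OF W wg1 tW])
    show "Inr 0 \<in> Field ?g1" by (simp add: Field_ord_plus_nat[OF g])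
    show "bij_betw (Inl \<circ> e) (underS W t) (underS ?g1 (Inr 0))"
      unfolding underS_ord_plus_nat_Inr[OF g zero_less_one] using e_bij
      by (rule bij_betw_trans) (simp add: bij_betw_def)
    show "(x, y) \<in> W \<longleftrightarrow> ((Inl \<circ> e) x, (Inl \<circ> e) y) \<in> ?g1"
      if "x \<in> underS W t" "y \<in> underS W t" for x y
      using e_ord[OF that] by simp
  qed
  with F have "rank_ge Xc lt F g" unfolding rank_ge_def by simp
  with g \<alpha>g show thesis by (rule that)
qed

lemma rank_is_underS:
  assumes W: "Well_order W" and c: "countable (Field W)" and t: "is_pred W t t'"
    and "F \<in> rank_levels Xc lt W t" and "F \<notin> rank_levels Xc lt W t'"
  shows "rank_is Xc lt F (Restr W (underS W t))"
  unfolding rank_is_def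
proof (intro conjI allI impI)
  show "(g, Restr W (underS W t)) \<in> ordLeq" if "Well_order g" "rank_ge Xc lt F g" for g :: "nat rel"
    using rank_ge_imp_ordLeq_underS[OF W t assms(5) that] .
  fix d :: "nat rel"
  assume "Well_order d"
    and upper: "\<forall>g :: nat rel. Well_order g \<longrightarrow> rank_ge Xc lt F g \<longrightarrow> (g, d) \<in> ordLeq"
  have "t \<in> Field W" using t unfolding is_pred_def by (blast intro: FieldI1)
  moreover have "countable (underS W t)"
    by (rule countable_subset[OF Order_Relation.underS_Field c])
  ultimately obtain g :: "nat rel" where "Well_order g" "(Restr W (underS W t), g) \<in> ordIso"
    "rank_ge Xc lt F g"
    using rank_ge_ordIso_underS[OF W _ _ assms(4)] by blast
  with upper show "(Restr W (underS W t), d) \<in> ordLeq" using ordIso_ordLeq_trans by blast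
qed

section \<open>Gaps of a finite suborder\<close>

lemma strict_linear_on_irrefl: "strict_linear_on A lt \<Longrightarrow> x \<in> A \<Longrightarrow> \<not> lt x x"
  unfolding strict_linear_on_def by blast

lemma strict_linear_on_trans:
  "strict_linear_on A lt \<Longrightarrow> x \<in> A \<Longrightarrow> y \<in> A \<Longrightarrow> z \<in> A \<Longrightarrow> lt x y \<Longrightarrow> lt y z \<Longrightarrow> lt x z"
  unfolding strict_linear_on_def by blast

lemma strict_linear_on_total:
  "strict_linear_on A lt \<Longrightarrow> x \<in> A \<Longrightarrow> y \<in> A \<Longrightarrow> x \<noteq> y \<Longrightarrow> lt x y \<or> lt y x"
  unfolding strict_linear_on_def by blast

lemma strict_linear_on_asym: "strict_linear_on A lt \<Longrightarrow> x \<in> A \<Longrightarrow> y \<in> A \<Longrightarrow> lt x y \<Longrightarrow> \<not> lt y x"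
  unfolding strict_linear_on_def by blast

lemma strict_linear_on_inv_image:
  "strict_linear_on S lt \<Longrightarrow> inj_on k A \<Longrightarrow> k ` A \<subseteq> S \<Longrightarrow> strict_linear_on A (\<lambda>x y. lt (k x) (k y))"
  unfolding strict_linear_on_def inj_on_def by (metis image_subset_iff)

definition lex_less :: "('a \<Rightarrow> 'a \<Rightarrow> bool) \<Rightarrow> 'a \<times> nat \<Rightarrow> 'a \<times> nat \<Rightarrow> bool" where
  "lex_less lt p q \<longleftrightarrow> lt (fst p) (fst q) \<or> (fst p = fst q \<and> snd p < snd q)"

lemma strict_linear_on_lex_less:
  assumes "strict_linear_on S lt"
  shows "strict_linear_on (S \<times> UNIV) (lex_less lt)"
  unfolding strict_linear_on_def lex_less_def
proof (intro conjI ballI impI)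
  fix x y z :: "_ \<times> nat" assume "x \<in> S \<times> UNIV" "y \<in> S \<times> UNIV" "z \<in> S \<times> UNIV"
  then show "lt (fst x) (fst y) \<or> fst x = fst y \<and> snd x < snd y \<Longrightarrow>
      lt (fst y) (fst z) \<or> fst y = fst z \<and> snd y < snd z \<Longrightarrow>
      lt (fst x) (fst z) \<or> fst x = fst z \<and> snd x < snd z"
    by (auto dest: strict_linear_on_trans[OF assms])
  show "x \<noteq> y \<Longrightarrow> (lt (fst x) (fst y) \<or> fst x = fst y \<and> snd x < snd y) \<or>
      (lt (fst y) (fst x) \<or> fst y = fst x \<and> snd y < snd x)"
    using \<open>x \<in> S \<times> UNIV\<close> \<open>y \<in> S \<times> UNIV\<close>
    by (cases x; cases y) (auto simp: neq_iff dest: strict_linear_on_total[OF assms])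
qed (auto dest: strict_linear_on_irrefl[OF assms])

lemma strict_linear_on_finite_max:
  assumes sl: "strict_linear_on X lt" and "finite A" "A \<noteq> {}" "A \<subseteq> X"
  shows "\<exists>a\<in>A. \<forall>x\<in>A. x = a \<or> lt x a"
  using assms(2-4)
proof (induction A rule: finite_ne_induct)
  case (insert x F)
  then obtain a where a: "a \<in> F" "\<forall>y\<in>F. y = a \<or> lt y a" by blast
  with insert strict_linear_on_total[OF sl, of x a] strict_linear_on_trans[OF sl, of _ a x]
  show ?case by (metis insert_iff subset_iff)
qed simp

lemma strict_linear_on_finite_min:
  assumes "strict_linear_on X lt" "finite A" "A \<noteq> {}" "A \<subseteq> X"
  shows "\<exists>a\<in>A. \<forall>x\<in>A. x = a \<or> lt a x"
proof -
  have "strict_linear_on X (\<lambda>x y. lt y x)"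
    using assms(1) unfolding strict_linear_on_def by blast
  from strict_linear_on_finite_max[OF this assms(2-4)] show ?thesis .
qed

datatype 'a ext_pt = Bot | Pt 'a | Top

fun ext_less :: "('a \<Rightarrow> 'a \<Rightarrow> bool) \<Rightarrow> 'a ext_pt \<Rightarrow> 'a ext_pt \<Rightarrow> bool" where
  "ext_less lt Bot y = (y \<noteq> Bot)"
| "ext_less lt (Pt x) Bot = False"
| "ext_less lt (Pt x) (Pt y) = lt x y"
| "ext_less lt (Pt x) Top = True"
| "ext_less lt Top y = False"

lemma ext_less_Bot_right [simp]: "\<not> ext_less lt e Bot"
  by (cases e) auto

lemma ext_less_Top_right [simp]: "ext_less lt e Top \<longleftrightarrow> e \<noteq> Top"
  by (cases e) auto

definition ext_pts :: "'a set \<Rightarrow> 'a ext_pt set" where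
  "ext_pts A = {Bot, Top} \<union> Pt ` A"

lemma ext_pts_simps [simp]: "Bot \<in> ext_pts A" "Top \<in> ext_pts A" "Pt x \<in> ext_pts A \<longleftrightarrow> x \<in> A"
  unfolding ext_pts_def by auto

lemma ext_pts_mono: "A \<subseteq> B \<Longrightarrow> ext_pts A \<subseteq> ext_pts B"
  unfolding ext_pts_def by auto

lemma ext_pts_insert: "ext_pts (insert c A) = insert (Pt c) (ext_pts A)"
  unfolding ext_pts_def by auto

lemma strict_linear_on_ext_pts:
  assumes "strict_linear_on A lt"
  shows "strict_linear_on (ext_pts A) (ext_less lt)"
  unfolding strict_linear_on_def
proof (intro conjI ballI impI)
  fix x y z assume "x \<in> ext_pts A" "y \<in> ext_pts A" "z \<in> ext_pts A"
    "ext_less lt x y" "ext_less lt y z"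
  then show "ext_less lt x z"
    by (cases x; cases y; cases z) (auto dest: strict_linear_on_trans[OF assms])
next
  fix x assume "x \<in> ext_pts A"
  then show "\<not> ext_less lt x x"
    by (cases x) (auto dest: strict_linear_on_irrefl[OF assms])
next
  fix x y assume "x \<in> ext_pts A" "y \<in> ext_pts A" "x \<noteq> y"
  then show "ext_less lt x y \<or> ext_less lt y x"
    by (cases x; cases y) (auto dest: strict_linear_on_total[OF assms])
qed

abbreviation between :: "('a \<Rightarrow> 'a \<Rightarrow> bool) \<Rightarrow> 'a ext_pt \<Rightarrow> 'a \<Rightarrow> 'a ext_pt \<Rightarrow> bool" where
  "between lt e1 c e2 \<equiv> ext_less lt e1 (Pt c) \<and> ext_less lt (Pt c) e2"

definition gaps :: "('a \<Rightarrow> 'a \<Rightarrow> bool) \<Rightarrow> 'a set \<Rightarrow> ('a ext_pt \<times> 'a ext_pt) set" where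
  "gaps lt F = {(e1, e2). e1 \<in> ext_pts F \<and> e2 \<in> ext_pts F \<and> ext_less lt e1 e2 \<and>
      (\<forall>x\<in>F. \<not> between lt e1 x e2)}"

lemma gaps_iff:
  "(e1, e2) \<in> gaps lt F \<longleftrightarrow>
    e1 \<in> ext_pts F \<and> e2 \<in> ext_pts F \<and> ext_less lt e1 e2 \<and> (\<forall>x\<in>F. \<not> between lt e1 x e2)"
  unfolding gaps_def by simp

lemma gaps_empty: "gaps lt {} = {(Bot, Top)}"
  unfolding gaps_def ext_pts_def by (auto elim: ext_less.elims)

lemma between_gap_not_in:
  "(e1, e2) \<in> gaps lt F \<Longrightarrow> between lt e1 c e2 \<Longrightarrow> c \<notin> F"
  unfolding gaps_iff by blast

context
  fixes Xc :: "'a set" and lt :: "'a \<Rightarrow> 'a \<Rightarrow> bool" and F :: "'a set"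
  assumes sl: "strict_linear_on Xc lt" and FX: "F \<subseteq> Xc"
begin

private lemma slE: "strict_linear_on (ext_pts Xc) (ext_less lt)"
  by (rule strict_linear_on_ext_pts[OF sl])

lemma gap_ext_pts: "(e1, e2) \<in> gaps lt F \<Longrightarrow> e1 \<in> ext_pts Xc \<and> e2 \<in> ext_pts Xc"
  using ext_pts_mono[OF FX] unfolding gaps_iff by blast

lemma gap_right_unique:
  assumes "(e, e1) \<in> gaps lt F" "(e, e2) \<in> gaps lt F"
  shows "e1 = e2"
proof (rule ccontr)
  assume "e1 \<noteq> e2"
  then consider "ext_less lt e1 e2" | "ext_less lt e2 e1"
    using strict_linear_on_total[OF slE] gap_ext_pts[OF assms(1)] gap_ext_pts[OF assms(2)] by blast
  then show False
    using assms unfolding gaps_iff ext_pts_def by cases auto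
qed

lemma gap_left_unique:
  assumes "(e1, e) \<in> gaps lt F" "(e2, e) \<in> gaps lt F"
  shows "e1 = e2"
proof (rule ccontr)
  assume "e1 \<noteq> e2"
  then consider "ext_less lt e1 e2" | "ext_less lt e2 e1"
    using strict_linear_on_total[OF slE] gap_ext_pts[OF assms(1)] gap_ext_pts[OF assms(2)] by blast
  then show False
    using assms unfolding gaps_iff ext_pts_def by cases auto
qed

lemma between_gap_iff:
  assumes g: "(e1, e2) \<in> gaps lt F" and c: "c \<in> Xc" "c \<notin> F"
  shows "between lt e1 c e2 \<longleftrightarrow> (\<forall>x\<in>F. lt x c \<longleftrightarrow> ext_less lt (Pt x) e2)"
proof
  assume bc: "between lt e1 c e2"
  show "\<forall>x\<in>F. lt x c \<longleftrightarrow> ext_less lt (Pt x) e2"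
  proof
    fix x assume x: "x \<in> F"
    then have xE: "Pt x \<in> ext_pts Xc" using FX by auto
    have "Pt x = e1 \<or> ext_less lt (Pt x) e1" if "ext_less lt (Pt x) e2"
      using that g x strict_linear_on_total[OF slE xE, of e1] gap_ext_pts[OF g] unfolding gaps_iff
      by blast
    then show "lt x c \<longleftrightarrow> ext_less lt (Pt x) e2"
      using bc strict_linear_on_trans[OF slE xE _ _ , of "Pt c" e2] strict_linear_on_trans[OF slE
        xE, of e1 "Pt c"]
        gap_ext_pts[OF g] c(1) by auto
  qed
next
  assume pos: "\<forall>x\<in>F. lt x c \<longleftrightarrow> ext_less lt (Pt x) e2"
  have "ext_less lt e1 (Pt c)"
    using g pos unfolding gaps_iff ext_pts_def by (cases e1) auto
  moreover have "ext_less lt (Pt c) e2"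
  proof (cases e2)
    case (Pt y)
    then have "y \<in> F" using g unfolding gaps_iff by simp
    with pos Pt c FX strict_linear_on_total[OF sl, of c y] strict_linear_on_irrefl[OF sl, of y]
    show ?thesis by auto
  qed (use g in \<open>auto simp: gaps_iff\<close>)
  ultimately show "between lt e1 c e2" ..
qed

lemma gaps_insert_split:
  assumes g: "(e1, e2) \<in> gaps lt F" and c: "c \<in> Xc" "between lt e1 c e2"
  shows "(e1, Pt c) \<in> gaps lt (insert c F)" "(Pt c, e2) \<in> gaps lt (insert c F)"
proof -
  have cE: "Pt c \<in> ext_pts Xc" using c by simp
  have xE: "Pt x \<in> ext_pts Xc" if "x \<in> F" for x using that FX by auto
  have eE: "e1 \<in> ext_pts Xc" "e2 \<in> ext_pts Xc" using gap_ext_pts[OF g] by auto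
  have new: "x \<in> F" if "x \<in> insert c F" "ext_less lt (Pt x) (Pt c)
    \<or> ext_less lt (Pt c) (Pt x)" for x
    using that strict_linear_on_irrefl[OF slE cE] by auto
  show "(e1, Pt c) \<in> gaps lt (insert c F)"
    using g c new strict_linear_on_trans[OF slE xE cE eE(2)]
      unfolding gaps_iff ext_pts_insert by blast
  show "(Pt c, e2) \<in> gaps lt (insert c F)"
    using g c new strict_linear_on_trans[OF slE eE(1) cE xE]
      unfolding gaps_iff ext_pts_insert by blast
qed

end

lemma gaps_insert_subset:
  assumes sl: "strict_linear_on Xc lt" and FX: "F \<subseteq> Xc" and g: "(e1, e2) \<in> gaps lt F"
    and c: "c \<in> Xc" "between lt e1 c e2"
  shows "gaps lt (insert c F) \<subseteq> insert (e1, Pt c) (insert (Pt c, e2) (gaps lt F))"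
proof
  fix d assume d: "d \<in> gaps lt (insert c F)"
  obtain d1 d2 where dd: "d = (d1, d2)" by (cases d)
  have FcX: "insert c F \<subseteq> Xc" using FX c by blast
  show "d \<in> insert (e1, Pt c) (insert (Pt c, e2) (gaps lt F))"
  proof (cases "d1 = Pt c \<or> d2 = Pt c")
    case True
    then show ?thesis
      using gap_right_unique[OF sl FcX, of d1 d2] gap_left_unique[OF sl FcX, of d1 d2]
        gaps_insert_split[OF sl FX g c] d dd by blast
  next
    case False
    with d dd show ?thesis by (auto simp: gaps_iff ext_pts_insert)
  qed
qed

section \<open>Prime extensions are determined by gaps\<close>

lemma prime_ext_insert:
  assumes "prime_ext lt F Bc ltB"
  obtains p where "p \<notin> F" "Bc = insert p F"
proof -
  from assms have card: "card (Bc - F) = 1" and FB: "F \<subseteq> Bc" unfolding prime_ext_def by auto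
  from card obtain p where "Bc - F = {p}" by (rule card_1_singletonE)
  with FB show thesis by (intro that[of p]) auto
qed

context
  fixes Xc :: "'a set" and lt :: "'a \<Rightarrow> 'a \<Rightarrow> bool" and F :: "'a set"
  assumes sl: "strict_linear_on Xc lt" and FX: "F \<subseteq> Xc"
begin

lemma realizes_insert:
  assumes pe: "prime_ext lt F (insert p F) ltB" and p: "p \<notin> F" and c: "c \<in> Xc" "c \<notin> F"
    and pos: "\<forall>x\<in>F. ltB x p \<longleftrightarrow> lt x c"
  shows "realizes Xc lt F (insert p F) ltB (insert c F)"
proof -
  have slB: "strict_linear_on (insert p F) ltB" and agree: "\<forall>x\<in>F. \<forall>y\<in>F. ltB x y \<longleftrightarrow> lt x y"
    using pe unfolding prime_ext_def by auto
  have neg: "ltB p x \<longleftrightarrow> lt c x" if "x \<in> F" for x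
  proof -
    have "x \<noteq> p" "x \<noteq> c" "x \<in> Xc" using that p c FX by auto
    then show ?thesis
      using that pos strict_linear_on_total[OF slB, of x p] strict_linear_on_asym[OF slB, of x p]
        strict_linear_on_total[OF sl, of x c] strict_linear_on_asym[OF sl, of x c] c(1)
      by auto
  qed
  let ?h = "id(p := c)"
  have "bij_betw ?h (insert p F) (insert c F)"
    using p c unfolding bij_betw_def inj_on_def by auto
  moreover have "ltB x y \<longleftrightarrow> lt (?h x) (?h y)" if "x \<in> insert p F" "y \<in> insert p F" for x y
    using that p agree pos neg strict_linear_on_irrefl[OF slB, of p]
      strict_linear_on_irrefl[OF sl c(1)]
    by (cases "x = p"; cases "y = p") auto
  ultimately show ?thesis
    unfolding realizes_def using FX c p by (intro conjI exI[of _ ?h]) auto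
qed

lemma realizes_insertD:
  assumes "realizes Xc lt F (insert p F) ltB C" and p: "p \<notin> F"
  obtains c where "C = insert c F" "c \<in> Xc" "c \<notin> F" "\<forall>x\<in>F. ltB x p \<longleftrightarrow> lt x c"
proof -
  from assms(1) obtain h where h: "bij_betw h (insert p F) C" "\<forall>x\<in>F. h x = x"
    and ord: "\<forall>x\<in>insert p F. \<forall>y\<in>insert p F. ltB x y \<longleftrightarrow> lt (h x) (h y)" and CX: "C \<subseteq> Xc"
    unfolding realizes_def by blast
  have C: "C = insert (h p) F"
    using h unfolding bij_betw_def by force
  have "h p \<notin> F"
    using h p inj_onD[of h "insert p F" p "h p"] unfolding bij_betw_def by force
  with C CX ord h(2) show thesis by (intro that[of "h p"]) auto
qed

lemma gap_of_cut:
  assumes fin: "finite F" and D: "D \<subseteq> F"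
    and down: "\<And>x y. x \<in> D \<Longrightarrow> y \<in> F \<Longrightarrow> lt y x \<Longrightarrow> y \<in> D"
  obtains e1 e2 where "(e1, e2) \<in> gaps lt F" "\<forall>x\<in>F. x \<in> D \<longleftrightarrow> ext_less lt (Pt x) e2"
proof -
  have xX: "x \<in> Xc" if "x \<in> F" for x using that FX by blast
  obtain e2 where e2: "e2 \<in> ext_pts F" "e2 \<noteq> Bot" and cut: "\<forall>x\<in>F. x \<in> D \<longleftrightarrow> ext_less lt (Pt x) e2"
  proof (cases "F - D = {}")
    case True
    with D show thesis by (intro that[of Top]) auto
  next
    case False
    then obtain b where b: "b \<in> F - D" "\<forall>x\<in>F - D. x = b \<or> lt b x"
      using strict_linear_on_finite_min[OF sl _ False] fin FX by blast
    have "x \<in> D \<longleftrightarrow> lt x b" if "x \<in> F" for x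
      using that b down[of x b] xX strict_linear_on_total[OF sl, of x b]
        strict_linear_on_asym[OF sl, of b x] strict_linear_on_irrefl[OF sl, of b]
      by (cases "x = b") auto
    with b show thesis by (intro that[of "Pt b"]) auto
  qed
  obtain e1 where e1: "e1 \<in> ext_pts F" "ext_less lt e1 e2" and top: "\<forall>x\<in>D. \<not> ext_less lt e1 (Pt x)"
  proof (cases "D = {}")
    case True
    with e2 show thesis by (intro that[of Bot]) auto
  next
    case False
    then obtain a where a: "a \<in> D" "\<forall>x\<in>D. x = a \<or> lt x a"
      using strict_linear_on_finite_max[OF sl _ False] fin D FX
        by (meson finite_subset subset_trans)
    have "a \<in> F" using a D by blast
    moreover have "\<not> lt a x" if "x \<in> D" for x
    proof
      assume "lt a x"
      moreover have "x \<in> Xc" "a \<in> Xc" using that \<open>a \<in> F\<close> D FX by auto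
      ultimately show False
        using a(2) that strict_linear_on_asym[OF sl] strict_linear_on_irrefl[OF sl] by metis
    qed
    ultimately show thesis
      using cut a(1) by (intro that[of "Pt a"]) auto
  qed
  have "(e1, e2) \<in> gaps lt F"
    unfolding gaps_iff using e1 e2 cut top by blast
  from that[OF this cut] show thesis .
qed

lemma prime_ext_in_gap:
  assumes g: "(e1, e2) \<in> gaps lt F" and fin: "finite F" and p: "p \<notin> F"
  obtains ltB where "prime_ext lt F (insert p F) ltB" "\<forall>x\<in>F. ltB x p \<longleftrightarrow> ext_less lt (Pt x) e2"
proof -
  \<comment> \<open>ordering by \<open>key\<close> places \<open>p\<close> immediately below \<open>e2\<close>\<close>
  define key where "key x = (if x = p then (e2, 0) else (Pt x, 1 :: nat))" for x
  define ltB where "ltB x y \<longleftrightarrow> lex_less (ext_less lt) (key x) (key y)" for x y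
  have "inj_on key (insert p F)" "key ` insert p F \<subseteq> ext_pts Xc \<times> UNIV"
    using p FX gap_ext_pts[OF sl FX g] unfolding key_def inj_on_def by auto
  with strict_linear_on_lex_less[OF strict_linear_on_ext_pts[OF sl]]
  have "strict_linear_on (insert p F) ltB"
    unfolding ltB_def by (rule strict_linear_on_inv_image)
  moreover have "insert p F - F = {p}" using p by blast
  ultimately have "prime_ext lt F (insert p F) ltB"
    unfolding prime_ext_def using fin p by (auto simp: ltB_def key_def lex_less_def)
  moreover have "\<forall>x\<in>F. ltB x p \<longleftrightarrow> ext_less lt (Pt x) e2"
    using p by (auto simp: ltB_def key_def lex_less_def)
  ultimately show thesis by (rule that)
qed

end

lemma ext_step_iff_gaps:
  fixes Xc :: "'a set"
  assumes sl: "strict_linear_on Xc lt" and inf: "infinite (UNIV :: 'a set)" and F: "F \<in> age Xc"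
  shows "F \<in> ext_step Xc lt T \<longleftrightarrow>
    (\<forall>e1 e2. (e1, e2) \<in> gaps lt F \<longrightarrow> (\<exists>c\<in>Xc. between lt e1 c e2 \<and> insert c F \<in> T))"
proof -
  have FX: "F \<subseteq> Xc" and fin: "finite F" using F unfolding age_def by auto
  show ?thesis
  proof (intro iffI allI impI)
    fix e1 e2 assume "F \<in> ext_step Xc lt T" and g: "(e1, e2) \<in> gaps lt F"
    then have H: "\<And>Bc ltB. prime_ext lt F Bc ltB \<Longrightarrow> \<exists>C. realizes Xc lt F Bc ltB C \<and> C \<in> T"
      unfolding ext_step_def by blast
    obtain p where p: "p \<notin> F" using ex_new_if_finite[OF inf fin] by blast
    obtain ltB where pe: "prime_ext lt F (insert p F) ltB"
      and pos: "\<forall>x\<in>F. ltB x p \<longleftrightarrow> ext_less lt (Pt x) e2"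
      using prime_ext_in_gap[OF sl FX g fin p] by blast
    obtain C where "realizes Xc lt F (insert p F) ltB C" "C \<in> T" using H[OF pe] by blast
    then obtain c where "insert c F \<in> T" "c \<in> Xc" "c \<notin> F" "\<forall>x\<in>F. ltB x p \<longleftrightarrow> lt x c"
      using realizes_insertD[OF sl FX _ p] by metis
    with pos show "\<exists>c\<in>Xc. between lt e1 c e2 \<and> insert c F \<in> T"
      using between_gap_iff[OF sl FX g] by auto
  next
    assume G: "\<forall>e1 e2. (e1, e2) \<in> gaps lt F \<longrightarrow> (\<exists>c\<in>Xc. between lt e1 c e2 \<and> insert c F \<in> T)"
    have "\<exists>C. realizes Xc lt F Bc ltB C \<and> C \<in> T" if pe: "prime_ext lt F Bc ltB" for Bc ltB
    proof -
      obtain p where p: "p \<notin> F" and Bc: "Bc = insert p F" using prime_ext_insert[OF pe] .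
      have slB: "strict_linear_on Bc ltB" and agree: "\<forall>x\<in>F. \<forall>y\<in>F. ltB x y \<longleftrightarrow> lt x y"
        using pe unfolding prime_ext_def by auto
      have "y \<in> {x\<in>F. ltB x p}" if "x \<in> {x\<in>F. ltB x p}" "y \<in> F" "lt y x" for x y
        using that agree strict_linear_on_trans[OF slB, of y x p] Bc by auto
      then obtain e1 e2 where g: "(e1, e2) \<in> gaps lt F"
        and cut: "\<forall>x\<in>F. x \<in> {x\<in>F. ltB x p} \<longleftrightarrow> ext_less lt (Pt x) e2"
        using gap_of_cut[OF sl FX fin, of "{x\<in>F. ltB x p}"] by blast
      obtain c where c: "c \<in> Xc" "between lt e1 c e2" "insert c F \<in> T" using G g by blast
      have "c \<notin> F" using between_gap_not_in[OF g c(2)] .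
      with c cut have "realizes Xc lt F Bc ltB (insert c F)"
        using realizes_insert[OF sl FX pe[unfolded Bc] p] between_gap_iff[OF sl FX g] Bc by auto
      with c show ?thesis by blast
    qed
    with F show "F \<in> ext_step Xc lt T" unfolding ext_step_def by blast
  qed
qed

section \<open>Rank levels read off from gap values\<close>

context
  fixes Xc :: "'a set" and lt :: "'a \<Rightarrow> 'a \<Rightarrow> bool"
    and W :: "'o rel" and V :: "'a ext_pt \<Rightarrow> 'a ext_pt \<Rightarrow> 'o"
  assumes sl: "strict_linear_on Xc lt" and inf: "infinite (UNIV :: 'a set)" and W: "Well_order W"
    and V_Field: "\<And>e1 e2. e1 \<in> ext_pts Xc \<Longrightarrow> e2 \<in> ext_pts Xc \<Longrightarrow> ext_less lt e1 e2 \<Longrightarrow>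
      V e1 e2 \<in> Field W"
    and V_split: "\<And>e1 e2 u. e1 \<in> ext_pts Xc \<Longrightarrow> e2 \<in> ext_pts Xc \<Longrightarrow> ext_less lt e1 e2 \<Longrightarrow>
      u \<in> Field W \<Longrightarrow> (u, V e1 e2) \<in> W \<and> u \<noteq> V e1 e2 \<longleftrightarrow>
      (\<exists>c\<in>Xc. between lt e1 c e2 \<and> (u, V e1 (Pt c)) \<in> W \<and> (u, V (Pt c) e2) \<in> W)"
begin

abbreviation gaps_above :: "'o \<Rightarrow> 'a set \<Rightarrow> bool" where
  "gaps_above u F \<equiv> \<forall>e1 e2. (e1, e2) \<in> gaps lt F \<longrightarrow> (u, V e1 e2) \<in> W"

lemma gap_split:
  assumes F: "F \<in> age Xc" and g: "(e1, e2) \<in> gaps lt F" and u: "u \<in> Field W"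
  shows "(\<exists>c\<in>Xc. between lt e1 c e2 \<and> gaps_above u (insert c F)) \<Longrightarrow> (u, V e1 e2) \<in> W \<and> u \<noteq> V e1 e2"
    and "(u, V e1 e2) \<in> W \<and> u \<noteq> V e1 e2 \<Longrightarrow> (\<And>d1 d2. (d1, d2) \<in> gaps lt F \<Longrightarrow> (u, V d1 d2) \<in> W) \<Longrightarrow>
      \<exists>c\<in>Xc. between lt e1 c e2 \<and> gaps_above u (insert c F)"
proof -
  have FX: "F \<subseteq> Xc" using F unfolding age_def by blast
  have e: "e1 \<in> ext_pts Xc" "e2 \<in> ext_pts Xc" "ext_less lt e1 e2"
    using gap_ext_pts[OF sl FX g] g unfolding gaps_iff by auto
  show "(u, V e1 e2) \<in> W \<and> u \<noteq> V e1 e2"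
    if "\<exists>c\<in>Xc. between lt e1 c e2 \<and> gaps_above u (insert c F)"
    using that gaps_insert_split[OF sl FX g] V_split[OF e u] by blast
  show "\<exists>c\<in>Xc. between lt e1 c e2 \<and> gaps_above u (insert c F)"
    if below: "(u, V e1 e2) \<in> W \<and> u \<noteq> V e1 e2" and old: "\<And>d1 d2. (d1, d2) \<in> gaps lt F
      \<Longrightarrow> (u, V d1 d2) \<in> W"
  proof -
    obtain c where c: "c \<in> Xc" "between lt e1 c e2" "(u, V e1 (Pt c)) \<in> W" "(u, V (Pt c) e2) \<in> W"
      using V_split[OF e u] below by blast
    with old gaps_insert_subset[OF sl FX g c(1,2)] show ?thesis by blast
  qed
qed

lemma rank_levels_gaps_pred:
  assumes p: "is_pred W u w"
    and IH: "\<And>F. F \<in> rank_levels Xc lt W u \<longleftrightarrow> F \<in> age Xc \<and> gaps_above u F"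
  shows "F \<in> rank_levels Xc lt W w \<longleftrightarrow> F \<in> age Xc \<and> gaps_above w F"
proof (cases "F \<in> age Xc")
  case F: True
  have FX: "F \<subseteq> Xc" using F unfolding age_def by blast
  have u: "u \<in> Field W" using p unfolding is_pred_def by (blast intro: FieldI1)
  have V_gap: "V e1 e2 \<in> Field W" if "(e1, e2) \<in> gaps lt F" for e1 e2
    using that gap_ext_pts[OF sl FX that] V_Field unfolding gaps_iff by blast
  have age: "insert c F \<in> age Xc" if "c \<in> Xc" for c using that F unfolding age_def by auto
  have "F \<in> rank_levels Xc lt W w \<longleftrightarrow>
      (\<forall>e1 e2. (e1, e2) \<in> gaps lt F \<longrightarrow> (\<exists>c\<in>Xc. between lt e1 c e2 \<and> gaps_above u (insert c F)))"
    unfolding rank_levels_pred[OF W p] ext_step_iff_gaps[OF sl inf F] using IH age by blast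
  also have "\<dots> \<longleftrightarrow> (\<forall>e1 e2. (e1, e2) \<in> gaps lt F \<longrightarrow> (u, V e1 e2) \<in> W \<and> u \<noteq> V e1 e2)"
    using gap_split[OF F _ u] by blast
  also have "\<dots> \<longleftrightarrow> gaps_above w F"
    using is_pred_less_iff[OF W p V_gap] by blast
  finally show ?thesis using F by blast
next
  case False
  then show ?thesis
    using ext_step_subset_age unfolding rank_levels_pred[OF W p] by blast
qed

lemma rank_levels_gaps_limit:
  assumes np: "\<not> (\<exists>b. is_pred W b w)" and w: "w \<in> Field W"
    and IH: "\<And>v F. (v, w) \<in> W - Id \<Longrightarrow> F \<in> rank_levels Xc lt W v \<longleftrightarrow> F \<in> age Xc \<and> gaps_above v F"
  shows "F \<in> rank_levels Xc lt W w \<longleftrightarrow> F \<in> age Xc \<and> gaps_above w F"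
proof (cases "F \<in> age Xc")
  case F: True
  have FX: "F \<subseteq> Xc" using F unfolding age_def by blast
  have V_gap: "V e1 e2 \<in> Field W" if "(e1, e2) \<in> gaps lt F" for e1 e2
    using that gap_ext_pts[OF sl FX that] V_Field unfolding gaps_iff by blast
  have "F \<in> rank_levels Xc lt W w \<longleftrightarrow> (\<forall>v. (v, w) \<in> W - Id \<longrightarrow> gaps_above v F)"
    unfolding rank_levels_limit[OF W np] using IH F by blast
  also have "\<dots> \<longleftrightarrow> gaps_above w F"
    using Well_order_limit_le[OF W np w V_gap] Well_order_trans[OF W] by blast
  finally show ?thesis using F by blast
qed (simp add: rank_levels_limit[OF W np])

lemma rank_levels_iff_gaps:
  assumes "w \<in> Field W"
  shows "F \<in> rank_levels Xc lt W w \<longleftrightarrow> F \<in> age Xc \<and> gaps_above w F"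
  using Well_order_wf[OF W] assms
proof (induction w arbitrary: F rule: wf_induct_rule)
  case (less w)
  show ?case
  proof (cases "\<exists>u. is_pred W u w")
    case True
    then obtain u where u: "is_pred W u w" by blast
    then have "(u, w) \<in> W - Id" "u \<in> Field W"
      unfolding is_pred_def by (blast intro: FieldI1)+
    from rank_levels_gaps_pred[OF u less.IH[OF this]] show ?thesis .
  next
    case False
    have "F' \<in> rank_levels Xc lt W v \<longleftrightarrow> F' \<in> age Xc \<and> gaps_above v F'"
      if "(v, w) \<in> W - Id" for v F'
      using that by (intro less.IH) (auto intro: FieldI1)
    from rank_levels_gaps_limit[OF False less.prems this] show ?thesis .
  qed
qed

end

section \<open>Generalized points\<close>

datatype 'b level = Low | Lev 'b | High

fun level_less :: "'b rel \<Rightarrow> 'b level \<Rightarrow> 'b level \<Rightarrow> bool" where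
  "level_less r Low Low = False"
| "level_less r Low (Lev x) = (x \<in> Field r)"
| "level_less r Low High = True"
| "level_less r (Lev x) Low = False"
| "level_less r (Lev x) (Lev y) = ((x, y) \<in> r \<and> x \<noteq> y)"
| "level_less r (Lev x) High = (x \<in> Field r)"
| "level_less r High L = False"

definition levels :: "'b rel \<Rightarrow> 'b level set" where
  "levels r = {Low, High} \<union> Lev ` Field r"

lemma levels_simps[simp]: "Low \<in> levels r" "High \<in> levels r" "Lev x \<in> levels r \<longleftrightarrow> x \<in> Field r"
  unfolding levels_def by auto

lemma strict_linear_on_levels:
  assumes w: "Well_order r"
  shows "strict_linear_on (levels r) (level_less r)"
  unfolding strict_linear_on_def
proof (intro conjI ballI impI)
  fix x y z assume "x \<in> levels r" "y \<in> levels r" "z \<in> levels r"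
    and "level_less r x y" "level_less r y z"
  then show "level_less r x z"
    by (cases x; cases y; cases z)
      (auto dest: Well_order_antisym[OF w] intro: Well_order_trans[OF w] FieldI1)
next
  fix x y assume "x \<in> levels r" "y \<in> levels r" "x \<noteq> y"
  then show "level_less r x y \<or> level_less r y x"
    by (cases x; cases y) (auto dest: Well_order_total[OF w])
next
  fix x show "\<not> level_less r x x" by (cases x) auto
qed

definition agree_above :: "'b rel \<Rightarrow> 'b level \<Rightarrow> ('b level \<Rightarrow> int) \<Rightarrow> ('b level \<Rightarrow> int) \<Rightarrow> bool" where
  "agree_above r L P Q \<longleftrightarrow> (\<forall>L'\<in>levels r. level_less r L L' \<longrightarrow> P L' = Q L')"

definition top_diff :: "'b rel \<Rightarrow> ('b level \<Rightarrow> int) \<Rightarrow> ('b level \<Rightarrow> int) \<Rightarrow> 'b level \<Rightarrow> bool" where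
  "top_diff r P Q L \<longleftrightarrow> L \<in> levels r \<and> P L \<noteq> Q L \<and> agree_above r L P Q"

definition gp_less :: "'b rel \<Rightarrow> ('b level \<Rightarrow> int) \<Rightarrow> ('b level \<Rightarrow> int) \<Rightarrow> bool" where
  "gp_less r P Q \<longleftrightarrow> (\<exists>L. top_diff r P Q L \<and> P L < Q L)"

definition fin_levels :: "'b rel \<Rightarrow> ('b level \<Rightarrow> int) \<Rightarrow> bool" where
  "fin_levels r P \<longleftrightarrow> finite {L \<in> levels r. P L \<noteq> 0}"

definition top_level :: "'b rel \<Rightarrow> ('b level \<Rightarrow> int) \<Rightarrow> ('b level \<Rightarrow> int) \<Rightarrow> 'b level" where
  "top_level r P Q = (THE L. top_diff r P Q L)"

lemma top_diff_sym: "top_diff r P Q L \<Longrightarrow> top_diff r Q P L"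
  unfolding top_diff_def agree_above_def by auto

lemma top_diff_unique:
  assumes w: "Well_order r" and a: "top_diff r P Q a" and b: "top_diff r P Q b"
  shows "a = b"
proof (rule ccontr)
  assume ne: "a \<noteq> b"
  have aV: "a \<in> levels r" and bV: "b \<in> levels r" using a b unfolding top_diff_def by auto
  have "level_less r a b \<or> level_less r b a"
    using strict_linear_on_total[OF strict_linear_on_levels[OF w] aV bV ne] .
  then show False
  proof
    assume "level_less r a b"
    then have "P b = Q b" using a bV unfolding top_diff_def agree_above_def by blast
    then show False using b unfolding top_diff_def by blast
  next
    assume "level_less r b a"
    then have "P a = Q a" using b aV unfolding top_diff_def agree_above_def by blast
    then show False using a unfolding top_diff_def by blast
  qed
qed

lemma top_level_eq: "Well_order r \<Longrightarrow> top_diff r P Q L \<Longrightarrow> top_level r P Q = L"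
  unfolding top_level_def using top_diff_unique by blast

lemma top_diff_exists:
  assumes w: "Well_order r" and P: "fin_levels r P" and Q: "fin_levels r Q"
    and L0: "L0 \<in> levels r" "P L0 \<noteq> Q L0"
  shows "\<exists>L. top_diff r P Q L"
proof -
  let ?D = "{L \<in> levels r. P L \<noteq> Q L}"
  have "?D \<subseteq> {L \<in> levels r. P L \<noteq> 0} \<union> {L \<in> levels r. Q L \<noteq> 0}" by auto
  then have fin: "finite ?D" using P Q unfolding fin_levels_def by (meson finite_Un finite_subset)
  have ne: "?D \<noteq> {}" using L0 by blast
  obtain a where a: "a \<in> ?D" "\<forall>x\<in>?D. x = a \<or> level_less r x a"
    using strict_linear_on_finite_max[OF strict_linear_on_levels[OF w] fin ne] by blast
  have "agree_above r a P Q" unfolding agree_above_def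
  proof (intro ballI impI)
    fix L' assume L': "L' \<in> levels r" "level_less r a L'"
    show "P L' = Q L'"
    proof (rule ccontr)
      assume "P L' \<noteq> Q L'"
      then have "L' = a \<or> level_less r L' a" using a L' by blast
      then show False using L' strict_linear_on_asym[OF strict_linear_on_levels[OF w]]
        strict_linear_on_irrefl[OF strict_linear_on_levels[OF w]] a(1) by blast
    qed
  qed
  then show ?thesis using a(1) unfolding top_diff_def by blast
qed

lemma top_diff_lt:
  assumes w: "Well_order r" and a: "top_diff r P Q a" and b: "top_diff r Q R b"
    and ab: "level_less r a b"
  shows "top_diff r P R b \<and> P b = Q b"
proof -
  have aV: "a \<in> levels r" and bV: "b \<in> levels r" using a b unfolding top_diff_def by auto
  have Pb: "P b = Q b" using a bV ab unfolding top_diff_def agree_above_def by blast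
  have "agree_above r b P R" unfolding agree_above_def
  proof (intro ballI impI)
    fix L' assume L': "L' \<in> levels r" "level_less r b L'"
    have "level_less r a L'" using strict_linear_on_trans[OF strict_linear_on_levels[OF w] aV bV
      L'(1) ab L'(2)] .
    then show "P L' = R L'" using a b L' unfolding top_diff_def agree_above_def by auto
  qed
  then show ?thesis using b Pb bV unfolding top_diff_def by auto
qed

lemma top_diff_gt:
  assumes w: "Well_order r" and a: "top_diff r P Q a" and b: "top_diff r Q R b"
    and ba: "level_less r b a"
  shows "top_diff r P R a \<and> Q a = R a"
  using top_diff_lt[OF w top_diff_sym[OF b] top_diff_sym[OF a] ba] top_diff_sym by metis

lemma top_diff_eq:
  assumes a: "top_diff r P Q a" and b: "top_diff r Q R a" and ne: "P a \<noteq> R a"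
  shows "top_diff r P R a"
  using a b ne unfolding top_diff_def agree_above_def by auto

lemma gp_less_irrefl: "\<not> gp_less r P P"
  unfolding gp_less_def by auto

lemma gp_less_trans:
  assumes w: "Well_order r" and pq: "gp_less r P Q" and qr: "gp_less r Q R"
  shows "gp_less r P R"
proof -
  obtain a where a: "top_diff r P Q a" "P a < Q a" using pq unfolding gp_less_def by blast
  obtain b where b: "top_diff r Q R b" "Q b < R b" using qr unfolding gp_less_def by blast
  have aV: "a \<in> levels r" and bV: "b \<in> levels r" using a b unfolding top_diff_def by auto
  show ?thesis
  proof (cases "a = b")
    case True
    then have "P a < R a" using a b by simp
    then have "top_diff r P R a" using top_diff_eq[OF a(1)] b True by fastforce
    then show ?thesis unfolding gp_less_def using \<open>P a < R a\<close> by blast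
  next
    case False
    then have "level_less r a b \<or> level_less r b a"
      using strict_linear_on_total[OF strict_linear_on_levels[OF w] aV bV] by blast
    then show ?thesis
    proof
      assume ab: "level_less r a b"
      then show ?thesis using top_diff_lt[OF w a(1) b(1) ab] b(2) unfolding gp_less_def by auto
    next
      assume ba: "level_less r b a"
      then show ?thesis using top_diff_gt[OF w a(1) b(1) ba] a(2) unfolding gp_less_def by auto
    qed
  qed
qed

lemma gp_less_asym: "Well_order r \<Longrightarrow> gp_less r P Q \<Longrightarrow> \<not> gp_less r Q P"
  using gp_less_trans gp_less_irrefl by blast

lemma gp_less_total:
  assumes w: "Well_order r" and P: "fin_levels r P" and Q: "fin_levels r Q"
    and L0: "L0 \<in> levels r" "P L0 \<noteq> Q L0"
  shows "gp_less r P Q \<or> gp_less r Q P"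
proof -
  obtain L where L: "top_diff r P Q L" using top_diff_exists[OF w P Q L0] by blast
  then have "P L < Q L \<or> Q L < P L" unfolding top_diff_def by auto
  then show ?thesis using L top_diff_sym unfolding gp_less_def by blast
qed

lemma gp_less_top_diff: "Well_order r \<Longrightarrow> gp_less r P Q
  \<Longrightarrow> top_diff r P Q (top_level r P Q) \<and> P (top_level r P Q) < Q (top_level r P Q)"
  unfolding gp_less_def using top_level_eq by metis

definition raise :: "'b rel \<Rightarrow> ('b level \<Rightarrow> int) \<Rightarrow> 'b level \<Rightarrow> int \<Rightarrow> ('b level \<Rightarrow> int)" where
  "raise r P L t = (\<lambda>K. if level_less r L K then P K else if K = L then P L + t else 0)"

lemma raise_above: "level_less r L K \<Longrightarrow> raise r P L t K = P K"
  unfolding raise_def by simp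

lemma raise_at: "Well_order r \<Longrightarrow> L \<in> levels r \<Longrightarrow> raise r P L t L = P L + t"
  unfolding raise_def using strict_linear_on_irrefl[OF strict_linear_on_levels] by metis

lemma raise_below: "\<not> level_less r L K \<Longrightarrow> K \<noteq> L \<Longrightarrow> raise r P L t K = 0"
  unfolding raise_def by simp

lemma raise_Lev_outside: "L \<in> levels r \<Longrightarrow> x \<notin> Field r \<Longrightarrow> raise r P L t (Lev x) = 0"
  unfolding raise_def by (cases L) (auto intro: FieldI2)

lemma finite_raise_Lev:
  assumes "finite {x. P (Lev x) \<noteq> 0}"
  shows "finite {x. raise r P L t (Lev x) \<noteq> 0}"
proof (rule finite_subset)
  show "{x. raise r P L t (Lev x) \<noteq> 0} \<subseteq> {x. P (Lev x) \<noteq> 0} \<union> {x. L = Lev x}"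
    unfolding raise_def by auto
  show "finite ({x. P (Lev x) \<noteq> 0} \<union> {x. L = Lev x})"
    using assms by (cases L) auto
qed

lemma top_diff_raise:
  assumes w: "Well_order r" and L: "L \<in> levels r" and t: "t \<noteq> 0"
  shows "top_diff r P (raise r P L t) L"
  unfolding top_diff_def agree_above_def
    using raise_at[OF w L, of P t] t L raise_above[of r L _ P t] by auto

lemma top_diff_raise_low:
  assumes w: "Well_order r" and pq: "top_diff r P Q L" and L': "L' \<in> levels r" "level_less r L' L"
  shows "top_diff r (raise r P L' t) Q L \<and> raise r P L' t L = P L"
proof -
  have LV: "L \<in> levels r" using pq unfolding top_diff_def by auto
  have s: "raise r P L' t K = P K" if "K \<in> levels r" "level_less r L K \<or> K = L" for K
  proof -
    have "level_less r L' K" using that strict_linear_on_trans[OF strict_linear_on_levels[OF w]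
      L'(1) LV that(1) L'(2)] L'(2) by blast
    then show ?thesis by (rule raise_above)
  qed
  show ?thesis using pq s LV unfolding top_diff_def agree_above_def by auto
qed

lemma top_diff_raise_same:
  assumes w: "Well_order r" and pq: "top_diff r P Q L" and ne: "P L + t \<noteq> Q L"
  shows "top_diff r (raise r P L t) Q L"
proof -
  have LV: "L \<in> levels r" using pq unfolding top_diff_def by auto
  show ?thesis using pq ne raise_at[OF w LV] raise_above[of r L] LV
    unfolding top_diff_def agree_above_def by auto
qed

definition floor_log2 :: "nat \<Rightarrow> nat" where
  "floor_log2 j = nat \<lfloor>log 2 (real j)\<rfloor>"

lemma floor_log2_le_iff:
  assumes j: "j \<ge> 1"
  shows "n \<le> floor_log2 j \<longleftrightarrow> 2 ^ n \<le> j"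
proof -
  have jp: "(0::real) < real j" using j by simp
  have "0 \<le> log 2 (real j)" using j by simp
  then have "0 \<le> \<lfloor>log 2 (real j)\<rfloor>" by simp
  then have "n \<le> floor_log2 j \<longleftrightarrow> int n \<le> \<lfloor>log 2 (real j)\<rfloor>"
    unfolding floor_log2_def by (simp add: le_nat_iff)
  also have "\<dots> \<longleftrightarrow> real n \<le> log 2 (real j)" by linarith
  also have "\<dots> \<longleftrightarrow> 2 powr (real n) \<le> real j" using le_log_iff[OF _ jp, of 2 "real n"] by simp
  also have "\<dots> \<longleftrightarrow> (2::real) ^ n \<le> real j" by (simp add: powr_realpow)
  also have "\<dots> \<longleftrightarrow> 2 ^ n \<le> j" by (metis of_nat_le_iff of_nat_numeral of_nat_power)
  finally show ?thesis .
qed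

lemma floor_log2_mono: "1 \<le> i \<Longrightarrow> i \<le> j \<Longrightarrow> floor_log2 i \<le> floor_log2 j"
  using floor_log2_le_iff by (metis le_trans order_refl)

lemma floor_log2_sum:
  assumes "j1 \<ge> 1" "j2 \<ge> 1"
  shows "min (floor_log2 j1) (floor_log2 j2) < floor_log2 (j1 + j2)"
proof -
  let ?n = "min (floor_log2 j1) (floor_log2 j2)"
  have "2 ^ ?n \<le> j1" using floor_log2_le_iff[OF assms(1), of ?n] by simp
  moreover have "2 ^ ?n \<le> j2" using floor_log2_le_iff[OF assms(2), of ?n] by simp
  ultimately have "2 ^ Suc ?n \<le> j1 + j2" by simp
  then have "Suc ?n \<le> floor_log2 (j1 + j2)"
    using floor_log2_le_iff[of "j1 + j2" "Suc ?n"] assms by simp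
  then show ?thesis by simp
qed

lemma floor_log2_pow: "floor_log2 (2 ^ n) = n"
proof -
  have "k \<le> floor_log2 (2 ^ n) \<longleftrightarrow> k \<le> n" for k
    using floor_log2_le_iff[of "2 ^ n" k] by (simp add: Suc_leI)
  then show ?thesis by (meson le_antisym order_refl)
qed


definition gap_val :: "'b rel \<Rightarrow> ('b level \<Rightarrow> int) \<Rightarrow> ('b level \<Rightarrow> int) \<Rightarrow> 'b level \<times> nat" where
  "gap_val r P Q = (top_level r P Q, floor_log2 (nat (Q (top_level r P Q) - P (top_level r P Q))))"

definition val_le :: "'b rel \<Rightarrow> 'b level \<times> nat \<Rightarrow> 'b level \<times> nat \<Rightarrow> bool" where
  "val_le r a b \<longleftrightarrow> level_less r (fst a) (fst b) \<or> (fst a = fst b \<and> snd a \<le> snd b)"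

definition val_less :: "'b rel \<Rightarrow> 'b level \<times> nat \<Rightarrow> 'b level \<times> nat \<Rightarrow> bool" where
  "val_less r a b \<longleftrightarrow> level_less r (fst a) (fst b) \<or> (fst a = fst b \<and> snd a < snd b)"

lemma gap_val_top_diff: "Well_order r \<Longrightarrow> top_diff r P Q L
  \<Longrightarrow> gap_val r P Q = (L, floor_log2 (nat (Q L - P L)))"
  unfolding gap_val_def using top_level_eq by metis

lemma val_less_gap_val_split:
  assumes w: "Well_order r" and pc: "gp_less r P C" and cq: "gp_less r C Q"
    and uV: "fst u \<in> levels r"
    and u1: "val_le r u (gap_val r P C)" and u2: "val_le r u (gap_val r C Q)"
  shows "val_less r u (gap_val r P Q)"
proof -
  define a where "a = top_level r P C"
  define b where "b = top_level r C Q"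
  have a: "top_diff r P C a" "P a < C a" using gp_less_top_diff[OF w pc] unfolding a_def by auto
  have b: "top_diff r C Q b" "C b < Q b" using gp_less_top_diff[OF w cq] unfolding b_def by auto
  have aV: "a \<in> levels r" and bV: "b \<in> levels r" using a b unfolding top_diff_def by auto
  have ga: "gap_val r P C = (a, floor_log2 (nat (C a - P a)))" using gap_val_top_diff[OF w a(1)] .
  have gb: "gap_val r C Q = (b, floor_log2 (nat (Q b - C b)))" using gap_val_top_diff[OF w b(1)] .
  have sl: "strict_linear_on (levels r) (level_less r)" using strict_linear_on_levels[OF w] .
  show ?thesis
  proof (cases "a = b")
    case True
    have ne: "P a \<noteq> Q a" using a b True by simp
    have td: "top_diff r P Q a" using top_diff_eq[OF a(1)] b(1) True ne by simp
    have g: "gap_val r P Q = (a, floor_log2 (nat (Q a - P a)))" using gap_val_top_diff[OF w td] .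
    show ?thesis
    proof (cases "fst u = a")
      case False
      then have "level_less r (fst u) a" using u1 ga unfolding val_le_def by auto
      then show ?thesis using g unfolding val_less_def by simp
    next
      case ua: True
      have "snd u \<le> floor_log2 (nat (C a - P a))"
        using u1 ga ua strict_linear_on_irrefl[OF sl aV] unfolding val_le_def by auto
      moreover have "snd u \<le> floor_log2 (nat (Q a - C a))"
        using u2 gb ua True strict_linear_on_irrefl[OF sl aV] unfolding val_le_def by auto
      moreover have "nat (Q a - P a) = nat (C a - P a) + nat (Q a - C a)" using a b True by simp
      moreover have "min (floor_log2 (nat (C a - P a))) (floor_log2 (nat (Q a - C a))) < floor_log2
        (nat (C a - P a) + nat (Q a - C a))"
        by (rule floor_log2_sum) (use a b True in auto)
      ultimately have "snd u < floor_log2 (nat (C a - P a) + nat (Q a - C a))" by linarith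
      then have "snd u < floor_log2 (nat (Q a - P a))"
        using \<open>nat (Q a - P a) = nat (C a - P a) + nat (Q a - C a)\<close> by simp
      then show ?thesis using g ua unfolding val_less_def by simp
    qed
  next
    case False
    then have "level_less r a b \<or> level_less r b a"
      using strict_linear_on_total[OF sl aV bV] by blast
    then show ?thesis
    proof
      assume ab: "level_less r a b"
      have td: "top_diff r P Q b" using top_diff_lt[OF w a(1) b(1) ab] by blast
      have "level_less r (fst u) b"
      proof -
        have "fst u = a \<or> level_less r (fst u) a" using u1 ga unfolding val_le_def by auto
        then show ?thesis using ab strict_linear_on_trans[OF sl uV aV bV] by blast
      qed
      then show ?thesis using gap_val_top_diff[OF w td] unfolding val_less_def by simp
    next
      assume ba: "level_less r b a"
      have td: "top_diff r P Q a" using top_diff_gt[OF w a(1) b(1) ba] by blast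
      have "level_less r (fst u) a"
      proof -
        have "fst u = b \<or> level_less r (fst u) b" using u2 gb unfolding val_le_def by auto
        then show ?thesis using ba strict_linear_on_trans[OF sl uV bV aV] by blast
      qed
      then show ?thesis using gap_val_top_diff[OF w td] unfolding val_less_def by simp
    qed
  qed
qed

lemma gap_val_raise_top_level:
  assumes w: "Well_order r" and pq: "gp_less r P Q" and L: "L = top_level r P Q"
    and n: "n' < floor_log2 (nat (Q L - P L))"
  defines "C \<equiv> raise r P L (2 ^ n')"
  shows "gp_less r P C \<and> gp_less r C Q \<and> gap_val r P C = (L, n') \<and> val_le r (L, n') (gap_val r C Q)"
proof -
  have td: "top_diff r P Q L" "P L < Q L" using gp_less_top_diff[OF w pq] L by auto
  have LV: "L \<in> levels r" using td unfolding top_diff_def by auto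
  define j where "j = nat (Q L - P L)"
  have j1: "j \<ge> 1" using td unfolding j_def by simp
  have "Suc n' \<le> floor_log2 j" using n unfolding j_def by simp
  then have jb: "2 ^ Suc n' \<le> j" using floor_log2_le_iff[OF j1] by blast
  have t0: "(2::int) ^ n' \<noteq> 0" by simp
  have tdc: "top_diff r P C L" unfolding C_def using top_diff_raise[OF w LV t0] .
  have CL: "C L = P L + 2 ^ n'" unfolding C_def using raise_at[OF w LV] .
  have jint: "int j = Q L - P L" using td unfolding j_def by simp
  have big: "Q L - C L \<ge> 2 ^ n'"
  proof -
    have "int (2 ^ Suc n') \<le> int j" using jb by linarith
    then have "2 * 2 ^ n' \<le> Q L - P L" using jint by simp
    then show ?thesis using CL by simp
  qed
  have pos: "(0::int) < 2 ^ n'" by simp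
  have ne: "P L + 2 ^ n' \<noteq> Q L" using big CL pos by linarith
  have tdq: "top_diff r C Q L" unfolding C_def by (rule top_diff_raise_same[OF w td(1) ne])
  have g1: "gap_val r P C = (L, floor_log2 (nat (C L - P L)))" using gap_val_top_diff[OF w tdc] .
  have np: "nat ((2::int) ^ n') = 2 ^ n'" by (simp add: nat_power_eq)
  have g1': "gap_val r P C = (L, n')" using g1 CL np floor_log2_pow[of n'] by simp
  have g2: "gap_val r C Q = (L, floor_log2 (nat (Q L - C L)))" using gap_val_top_diff[OF w tdq] .
  have "n' \<le> floor_log2 (nat (Q L - C L))"
  proof -
    have one: "(1::int) \<le> 2 ^ n'" by simp
    have "int (2 ^ n') \<le> Q L - C L" using big by simp
    then have "2 ^ n' \<le> nat (Q L - C L)" using one big by linarith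
    moreover have "nat (Q L - C L) \<ge> 1" using big one by linarith
    ultimately show ?thesis using floor_log2_le_iff by blast
  qed
  then have "val_le r (L, n') (gap_val r C Q)" using g2 unfolding val_le_def by simp
  moreover have "gp_less r P C" unfolding gp_less_def using tdc CL by auto
  moreover have "C L < Q L" using big pos by linarith
  then have "gp_less r C Q" unfolding gp_less_def using tdq by blast
  ultimately show ?thesis using g1' by blast
qed

lemma gap_val_raise_below:
  assumes w: "Well_order r" and pq: "gp_less r P Q" and L: "L = top_level r P Q"
    and L'V: "L' \<in> levels r" and L'L: "level_less r L' L" and t: "t \<ge> 1"
  defines "C \<equiv> raise r P L' (int t)"
  shows "gp_less r P C \<and> gp_less r C Q \<and> gap_val r P C = (L', floor_log2 t)
    \<and> gap_val r C Q = gap_val r P Q"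
proof -
  have td: "top_diff r P Q L" "P L < Q L" using gp_less_top_diff[OF w pq] L by auto
  have t0: "int t \<noteq> 0" using t by simp
  have tdc: "top_diff r P C L'" unfolding C_def using top_diff_raise[OF w L'V t0] .
  have CL': "C L' = P L' + int t" unfolding C_def using raise_at[OF w L'V] .
  have s: "top_diff r C Q L \<and> C L = P L" unfolding C_def
    using top_diff_raise_low[OF w td(1) L'V L'L] .
  have "gap_val r P C = (L', floor_log2 (nat (C L' - P L')))" using gap_val_top_diff[OF w tdc] .
  then have g1: "gap_val r P C = (L', floor_log2 t)" using CL' by simp
  have "gap_val r C Q = (L, floor_log2 (nat (Q L - C L)))" using gap_val_top_diff[OF w] s by blast
  then have g2: "gap_val r C Q = gap_val r P Q" using gap_val_top_diff[OF w td(1)] s by simp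
  have "gp_less r P C" unfolding gp_less_def using tdc CL' t by auto
  moreover have "gp_less r C Q" unfolding gp_less_def using s td by auto
  ultimately show ?thesis using g1 g2 by blast
qed

lemma gap_val_lower_Low:
  assumes w: "Well_order r" and pq: "gp_less r P Q" and L: "L = top_level r P Q"
    and LF: "L \<noteq> Low" and t: "t \<ge> 1"
  defines "C \<equiv> Q(Low := Q Low - int t)"
  shows "gp_less r P C \<and> gp_less r C Q \<and> gap_val r C Q = (Low, floor_log2 t)
    \<and> gap_val r P C = gap_val r P Q"
proof -
  have td: "top_diff r P Q L" "P L < Q L" using gp_less_top_diff[OF w pq] L by auto
  have LV: "L \<in> levels r" using td unfolding top_diff_def by auto
  have tdq: "top_diff r C Q Low"
    unfolding top_diff_def agree_above_def C_def using t by auto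
  have CF: "C Low = Q Low - int t" unfolding C_def by simp
  have aboveL: "C L' = Q L'" if "level_less r L L'" for L'
  proof -
    have "L' \<noteq> Low" using that by (cases L; cases L') auto
    then show ?thesis unfolding C_def by simp
  qed
  have tdc: "top_diff r P C L"
    using td LF aboveL unfolding top_diff_def agree_above_def C_def by auto
  have g1: "gap_val r C Q = (Low, floor_log2 t)" using gap_val_top_diff[OF w tdq] CF by simp
  have CL: "C L = Q L" using LF unfolding C_def by simp
  have g2: "gap_val r P C = gap_val r P Q"
    using gap_val_top_diff[OF w tdc] gap_val_top_diff[OF w td(1)] CL by simp
  have "gp_less r P C" unfolding gp_less_def using tdc CL td by auto
  moreover have "gp_less r C Q" unfolding gp_less_def using tdq CF t by auto
  ultimately show ?thesis using g1 g2 by blast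
qed

lemma omega_exp_iff: "(f, g) \<in> omega_exp r \<longleftrightarrow> f \<in> fin_supp r \<and> g \<in> fin_supp r \<and>
   (f = g \<or> (\<exists>x\<in>Field r. f x < g x \<and> (\<forall>y\<in>Field r. (x, y) \<in> r \<and> y \<noteq> x \<longrightarrow> f y = g y)))"
  unfolding omega_exp_def by simp

lemma Field_omega_exp: "Field (omega_exp r) = fin_supp r"
proof (intro set_eqI iffI)
  fix f assume "f \<in> Field (omega_exp r)"
  then obtain g where "(f, g) \<in> omega_exp r \<or> (g, f) \<in> omega_exp r" unfolding Field_def by blast
  then show "f \<in> fin_supp r" unfolding omega_exp_iff by blast
next
  fix f assume "f \<in> fin_supp r"
  then have "(f, f) \<in> omega_exp r" unfolding omega_exp_iff by blast
  then show "f \<in> Field (omega_exp r)" by (rule FieldI1)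
qed

lemma ord_times_nat_iff: "((i, a), (j, b)) \<in> ord_times_nat r m \<longleftrightarrow>
   i < m \<and> j < m \<and> a \<in> Field r \<and> b \<in> Field r \<and> (i < j \<or> (i = j \<and> (a, b) \<in> r))"
  unfolding ord_times_nat_def by simp

lemma Field_ord_times_nat_omega_exp: "Field (ord_times_nat (omega_exp r) m) = {p. fst p < m
  \<and> snd p \<in> fin_supp r}"
proof (intro set_eqI iffI)
  fix p assume "p \<in> Field (ord_times_nat (omega_exp r) m)"
  then obtain q where "(p, q) \<in> ord_times_nat (omega_exp r) m
    \<or> (q, p) \<in> ord_times_nat (omega_exp r) m"
    unfolding Field_def by blast
  then show "p \<in> {p. fst p < m \<and> snd p \<in> fin_supp r}"
    by (cases p; cases q) (auto simp: ord_times_nat_iff Field_omega_exp)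
next
  fix p assume p: "p \<in> {p. fst p < m \<and> snd p \<in> fin_supp r}"
  obtain i f where pi: "p = (i, f)" by (cases p)
  have "(f, f) \<in> omega_exp r" using p pi unfolding omega_exp_iff by simp
  then have "(p, p) \<in> ord_times_nat (omega_exp r) m"
    using p pi by (simp add: ord_times_nat_iff Field_omega_exp)
  then show "p \<in> Field (ord_times_nat (omega_exp r) m)" by (rule FieldI1)
qed

lemma Z_carrier_iff: "((i, f), z) \<in> Z_carrier (ord_times_nat (omega_exp r) m)
  \<longleftrightarrow> i < m \<and> f \<in> fin_supp r"
  unfolding Z_carrier_def Field_ord_times_nat_omega_exp by simp

locale Z_omega_exp_copies =
  fixes \<beta> :: "'b rel" and m :: nat and x0 :: 'b
  assumes w: "Well_order \<beta>" and m1: "m \<ge> 1" and x0F: "x0 \<in> Field \<beta>"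
    and x0min: "\<And>y. y \<in> Field \<beta> \<Longrightarrow> (x0, y) \<in> \<beta>"
begin

abbreviation "Xc \<equiv> Z_carrier (ord_times_nat (omega_exp \<beta>) m)"
abbreviation "lt \<equiv> Z_less (ord_times_nat (omega_exp \<beta>) m)"

definition coords :: "(nat \<times> ('b \<Rightarrow> nat)) \<times> int \<Rightarrow> 'b level \<Rightarrow> int" where
  "coords p L =
    (case L of Low \<Rightarrow> snd p | Lev x \<Rightarrow> int (snd (fst p) x) | High \<Rightarrow> int (fst (fst p)))"

text \<open>The endpoint \<open>-\<infinity>\<close> has coordinate \<open>-1\<close> at the least level \<open>x0\<close> of \<open>\<beta>\<close>: as the
  \<open>\<beta>\<close>-coordinates of points are nonnegative, it lies below every point and never first differs
  from one at level \<open>Low\<close>.\<close>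

fun bot_pt :: "'b level \<Rightarrow> int" where
  "bot_pt (Lev x) = (if x = x0 then -1 else 0)"
| "bot_pt _ = 0"

fun top_pt :: "'b level \<Rightarrow> int" where
  "top_pt High = int m"
| "top_pt _ = 0"

fun ext_coords :: "((nat \<times> ('b \<Rightarrow> nat)) \<times> int) ext_pt \<Rightarrow> 'b level \<Rightarrow> int" where
  "ext_coords Bot = bot_pt"
| "ext_coords Top = top_pt"
| "ext_coords (Pt p) = coords p"

lemma coords_simps [simp]:
  "coords ((i, f), z) Low = z" "coords ((i, f), z) (Lev x) = int (f x)"
  "coords ((i, f), z) High = int i"
  unfolding coords_def by auto

lemma Z_carrierE: assumes "p \<in> Xc" obtains i f z where "p = ((i, f), z)" "i < m" "f \<in> fin_supp \<beta>"
  using assms by (cases p) (auto simp: Z_carrier_iff)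

lemma fin_suppD: "f \<in> fin_supp \<beta> \<Longrightarrow> finite {x. f x \<noteq> 0}" "f \<in> fin_supp \<beta> \<Longrightarrow> x \<notin> Field \<beta> \<Longrightarrow> f x = 0"
  unfolding fin_supp_def by auto

lemma fin_levels_if_finite_Lev:
  assumes "finite {x. P (Lev x) \<noteq> 0}"
  shows "fin_levels \<beta> P"
proof -
  have "{L \<in> levels \<beta>. P L \<noteq> 0} \<subseteq> {Low, High} \<union> Lev ` {x. P (Lev x) \<noteq> 0}"
  proof
    fix L assume "L \<in> {L \<in> levels \<beta>. P L \<noteq> 0}"
    then show "L \<in> {Low, High} \<union> Lev ` {x. P (Lev x) \<noteq> 0}" by (cases L) auto
  qed
  moreover have "finite ({Low, High} \<union> Lev ` {x. P (Lev x) \<noteq> 0})" using assms by simp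
  ultimately show ?thesis unfolding fin_levels_def by (rule finite_subset)
qed

lemma fin_levels_coords: "p \<in> Xc \<Longrightarrow> fin_levels \<beta> (coords p)"
  by (erule Z_carrierE) (auto intro!: fin_levels_if_finite_Lev dest: fin_suppD)

lemma fin_levels_bot_pt: "fin_levels \<beta> bot_pt"
proof (rule fin_levels_if_finite_Lev)
  have "{x. bot_pt (Lev x) \<noteq> 0} \<subseteq> {x0}" by auto
  then show "finite {x. bot_pt (Lev x) \<noteq> 0}" by (rule finite_subset) simp
qed

lemma fin_levels_top_pt: "fin_levels \<beta> top_pt"
  by (rule fin_levels_if_finite_Lev) simp

lemma top_diff_coords_iff:
  assumes f: "f \<in> fin_supp \<beta>" and f': "f' \<in> fin_supp \<beta>"
  shows "top_diff \<beta> (coords ((i, f), z)) (coords ((i', f'), z')) L \<longleftrightarrow>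
    (L = High \<and> i \<noteq> i') \<or>
    (\<exists>x\<in>Field \<beta>. L = Lev x \<and> i = i' \<and> f x \<noteq> f' x \<and> (\<forall>y\<in>Field \<beta>. (x, y) \<in> \<beta> \<and> y \<noteq> x \<longrightarrow> f y = f' y)) \<or>
    (L = Low \<and> i = i' \<and> f = f' \<and> z \<noteq> z')"
proof (cases L)
  case Low
  have "f = f' \<longleftrightarrow> (\<forall>y\<in>Field \<beta>. f y = f' y)"
  proof
    assume "\<forall>y\<in>Field \<beta>. f y = f' y"
    then have "f y = f' y" for y
      using f f' by (cases "y \<in> Field \<beta>") (auto simp: fin_supp_def)
    then show "f = f'" ..
  qed simp
  with Low show ?thesis by (auto simp: top_diff_def agree_above_def levels_def)
qed (auto simp: top_diff_def agree_above_def levels_def)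

lemma Z_less_iff_gp_less:
  assumes p: "p \<in> Xc" and q: "q \<in> Xc"
  shows "lt p q \<longleftrightarrow> gp_less \<beta> (coords p) (coords q)"
proof -
  obtain i f z where p: "p = ((i, f), z)" "i < m" "f \<in> fin_supp \<beta>" using p by (rule Z_carrierE)
  obtain i' f' z' where q: "q = ((i', f'), z')" "i' < m" "f' \<in> fin_supp \<beta>"
    using q by (rule Z_carrierE)
  have "lt p q \<longleftrightarrow> i < i' \<or> (i = i' \<and> f \<noteq> f' \<and> (f, f') \<in> omega_exp \<beta>) \<or> (i = i' \<and> f = f' \<and> z < z')"
    using p q Field_omega_exp unfolding Z_less_def by (auto simp: ord_times_nat_iff)
  also have "\<dots> \<longleftrightarrow> (\<exists>L. top_diff \<beta> (coords p) (coords q) L \<and> coords p L < coords q L)"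
    (is "?lhs \<longleftrightarrow> ?rhs")
  proof
    assume ?lhs
    then consider "i < i'"
      | x where "i = i'" "x \<in> Field \<beta>" "f x < f' x" "\<forall>y\<in>Field \<beta>. (x, y) \<in> \<beta> \<and> y \<noteq> x \<longrightarrow> f y = f' y"
      | "i = i'" "f = f'" "z < z'"
      unfolding omega_exp_iff by blast
    then show ?rhs
    proof cases
      case 1
      with p q show ?thesis by (intro exI[of _ High]) (simp add: top_diff_coords_iff)
    next
      case (2 x)
      with p q show ?thesis by (intro exI[of _ "Lev x"]) (auto simp: top_diff_coords_iff)
    next
      case 3
      with p q show ?thesis by (intro exI[of _ Low]) (simp add: top_diff_coords_iff)
    qed
  next
    assume ?rhs
    then obtain L where L: "top_diff \<beta> (coords ((i, f), z)) (coords ((i', f'), z')) L"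
      "coords ((i, f), z) L < coords ((i', f'), z') L"
      using p(1) q(1) by blast
    from L(1)[unfolded top_diff_coords_iff[OF p(3) q(3)]] L(2) p q show ?lhs
      unfolding omega_exp_iff by auto
  qed
  finally show ?thesis unfolding gp_less_def .
qed

lemma gp_less_coords_top_pt: "p \<in> Xc \<Longrightarrow> gp_less \<beta> (coords p) top_pt"
proof -
  assume "p \<in> Xc"
  then obtain i f z where pe: "p = ((i, f), z)" "i < m" by (rule Z_carrierE)
  have "top_diff \<beta> (coords p) top_pt High" unfolding top_diff_def agree_above_def using pe by simp
  moreover have "coords p High < top_pt High" using pe by simp
  ultimately show ?thesis unfolding gp_less_def by blast
qed

lemma gp_less_bot_pt_top_pt: "gp_less \<beta> bot_pt top_pt"
proof -
  have "top_diff \<beta> bot_pt top_pt High" unfolding top_diff_def agree_above_def using m1 by simp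
  moreover have "bot_pt High < top_pt High" using m1 by simp
  ultimately show ?thesis unfolding gp_less_def by blast
qed

lemma gp_less_bot_pt_coords: "p \<in> Xc \<Longrightarrow> gp_less \<beta> bot_pt (coords p)"
proof -
  assume pX: "p \<in> Xc"
  then obtain i f z where pe: "p = ((i, f), z)" "i < m" "f \<in> fin_supp \<beta>" by (rule Z_carrierE)
  have ne: "bot_pt (Lev x0) \<noteq> coords p (Lev x0)" using pe by simp
  have x0V: "Lev x0 \<in> levels \<beta>" using x0F by simp
  have "gp_less \<beta> bot_pt (coords p) \<or> gp_less \<beta> (coords p) bot_pt"
    using gp_less_total[OF w fin_levels_bot_pt fin_levels_coords[OF pX] x0V ne] .
  moreover have "\<not> gp_less \<beta> (coords p) bot_pt"
  proof
    assume "gp_less \<beta> (coords p) bot_pt"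
    then obtain L where L: "top_diff \<beta> (coords p) bot_pt L" "coords p L < bot_pt L"
      unfolding gp_less_def by blast
    show False
    proof (cases L)
      case Low
      then have "coords p (Lev x0) = bot_pt (Lev x0)"
        using L x0F unfolding top_diff_def agree_above_def by simp
      then show False using ne by simp
    next
      case (Lev x) then show False using L pe by (simp split: if_splits)
    next
      case High then show False using L pe by simp
    qed
  qed
  ultimately show ?thesis by blast
qed

lemma ext_less_iff_gp_less:
  assumes e1: "e1 \<in> ext_pts Xc" and e2: "e2 \<in> ext_pts Xc"
  shows "ext_less lt e1 e2 \<longleftrightarrow> gp_less \<beta> (ext_coords e1) (ext_coords e2)"
proof (cases e1)
  case Bot
  then show ?thesis
  proof (cases e2)
    case Bot then show ?thesis using \<open>e1 = Bot\<close> gp_less_irrefl by simp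
  next
    case (Pt q) then show ?thesis using \<open>e1 = Bot\<close> e2 gp_less_bot_pt_coords by simp
  next
    case Top then show ?thesis using \<open>e1 = Bot\<close> gp_less_bot_pt_top_pt by simp
  qed
next
  case (Pt p)
  have pX: "p \<in> Xc" using e1 Pt by simp
  show ?thesis
  proof (cases e2)
    case Bot then show ?thesis using Pt gp_less_asym[OF w gp_less_bot_pt_coords[OF pX]] by simp
  next
    case (Pt q) then show ?thesis using \<open>e1 = Pt p\<close> e2 pX Z_less_iff_gp_less by simp
  next
    case Top then show ?thesis using Pt gp_less_coords_top_pt[OF pX] by simp
  qed
next
  case Top
  then show ?thesis
  proof (cases e2)
    case Bot then show ?thesis using Top gp_less_asym[OF w gp_less_bot_pt_top_pt] by simp
  next
    case (Pt q) then show ?thesis using Top e2 gp_less_asym[OF w gp_less_coords_top_pt] by simp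
  next
    case Top then show ?thesis using \<open>e1 = Top\<close> gp_less_irrefl by simp
  qed
qed

lemma coords_diff:
  assumes p: "p \<in> Xc" and q: "q \<in> Xc" and ne: "p \<noteq> q"
  shows "\<exists>L\<in>levels \<beta>. coords p L \<noteq> coords q L"
proof -
  obtain i f z where pe: "p = ((i, f), z)" "i < m" "f \<in> fin_supp \<beta>" using p by (rule Z_carrierE)
  obtain i' f' z' where qe: "q = ((i', f'), z')" "i' < m" "f' \<in> fin_supp \<beta>"
    using q by (rule Z_carrierE)
  show ?thesis
  proof (cases "i = i' \<and> z = z'")
    case True
    then have "f \<noteq> f'" using ne pe qe by auto
    then obtain x where x: "f x \<noteq> f' x" by blast
    then have "x \<in> Field \<beta>" using fin_suppD(2)[OF pe(3)] fin_suppD(2)[OF qe(3)] by metis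
    then show ?thesis using x pe qe by (intro bexI[of _ "Lev x"]) auto
  next
    case False
    show ?thesis
    proof (cases "i = i'")
      case True
      then have "z \<noteq> z'" using False by simp
      then show ?thesis using pe qe by (intro bexI[of _ Low]) auto
    next
      case False
      then show ?thesis using pe qe by (intro bexI[of _ High]) auto
    qed
  qed
qed

lemma strict_linear_on_X: "strict_linear_on Xc lt"
  unfolding strict_linear_on_def
proof (intro conjI ballI impI)
  fix x assume x: "x \<in> Xc"
  show "\<not> lt x x" using Z_less_iff_gp_less[OF x x] gp_less_irrefl by simp
next
  fix x y z assume xyz: "x \<in> Xc" "y \<in> Xc" "z \<in> Xc" and xy: "lt x y" and yz: "lt y z"
  have "gp_less \<beta> (coords x) (coords y)" using Z_less_iff_gp_less[OF xyz(1,2)] xy by simp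
  moreover have "gp_less \<beta> (coords y) (coords z)" using Z_less_iff_gp_less[OF xyz(2,3)] yz by simp
  ultimately have "gp_less \<beta> (coords x) (coords z)" by (rule gp_less_trans[OF w])
  then show "lt x z" using Z_less_iff_gp_less[OF xyz(1,3)] by simp
next
  fix x y assume xy: "x \<in> Xc" "y \<in> Xc" "x \<noteq> y"
  then obtain L where "L \<in> levels \<beta>" "coords x L \<noteq> coords y L" using coords_diff by blast
  then have "gp_less \<beta> (coords x) (coords y) \<or> gp_less \<beta> (coords y) (coords x)"
    using gp_less_total[OF w fin_levels_coords[OF xy(1)] fin_levels_coords[OF xy(2)]] by blast
  then show "lt x y \<or> lt y x"
    using Z_less_iff_gp_less[OF xy(1,2)] Z_less_iff_gp_less[OF xy(2,1)] by blast
qed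


section \<open>Gap values\<close>

text \<open>\<open>val_pt L n\<close> is the ordinal \<open>\<omega> \<cdot> \<lambda>(L) + n\<close> of \<open>\<omega> \<cdot> (1 + \<beta>) + k\<close>, where \<open>\<lambda>(Low) = 0\<close>,
  \<open>\<lambda>(Lev x) = 1 + x\<close> and \<open>\<lambda>(High) = 1 + \<beta>\<close>.\<close>

fun val_pt :: "'b level \<Rightarrow> nat \<Rightarrow> ('b option \<times> nat) + nat" where
  "val_pt Low n = Inl (None, n)"
| "val_pt (Lev x) n = Inl (Some x, n)"
| "val_pt High n = Inr n"

lemma val_pt_inj: "val_pt L n = val_pt L' n' \<longleftrightarrow> L = L' \<and> n = n'"
  by (cases L; cases L') auto

abbreviation "val_bound \<equiv> floor_log2 m + 2"
abbreviation "Vals \<equiv> ord_plus_nat (omega_times (one_plus \<beta>)) val_bound"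

definition val_ok :: "'b level \<Rightarrow> nat \<Rightarrow> bool" where
  "val_ok L n \<longleftrightarrow> L \<in> levels \<beta> \<and> (L = High \<longrightarrow> n < val_bound)"

lemma Well_order_Vals: "Well_order Vals"
  using Well_order_ord_plus_nat[OF Well_order_omega_times[OF Well_order_one_plus[OF w]]] .

lemma Field_Vals: "Field Vals = Inl ` ((insert None (Some ` Field \<beta>)) \<times> UNIV) \<union> Inr `
  {..<val_bound}"
  unfolding Field_ord_plus_nat[OF Well_order_omega_times[OF Well_order_one_plus[OF w]]]
    Field_omega_times Field_one_plus ..

lemma Field_ValsE:
  assumes "u \<in> Field Vals"
  obtains L n where "val_ok L n" "u = val_pt L n"
proof -
  from assms consider (a) "\<exists>n. u = Inl (None, n)" | (b) "\<exists>x n. x \<in> Field \<beta>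
    \<and> u = Inl (Some x, n)" | (c) "\<exists>j<val_bound. u = Inr j"
    unfolding Field_Vals by blast
  then show ?thesis
  proof cases
    case a
    then obtain n where "u = Inl (None, n)" by blast
    then show ?thesis using that[of Low n] unfolding val_ok_def by simp
  next
    case b
    then obtain x n where "x \<in> Field \<beta>" "u = Inl (Some x, n)" by blast
    then show ?thesis using that[of "Lev x" n] unfolding val_ok_def by simp
  next
    case c
    then obtain j where "j < val_bound" "u = Inr j" by blast
    then show ?thesis using that[of High j] unfolding val_ok_def by simp
  qed
qed

lemma val_pt_in_Field: "val_ok L n \<Longrightarrow> val_pt L n \<in> Field Vals"
  unfolding Field_Vals val_ok_def by (cases L) auto

lemma val_pt_le_iff:
  assumes a: "val_ok L n" and b: "val_ok L' n'"
  shows "(val_pt L n, val_pt L' n') \<in> Vals \<longleftrightarrow> val_le \<beta> (L, n) (L', n')"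
  using a b unfolding val_ok_def val_le_def
    by (cases L; cases L') (auto simp: Field_one_plus Field_omega_times)

lemma val_le_val_less:
  assumes "fst a \<in> levels \<beta>"
  shows "val_le \<beta> a b \<and> a \<noteq> b \<longleftrightarrow> val_less \<beta> a b"
proof -
  have "\<not> level_less \<beta> (fst a) (fst a)"
    using strict_linear_on_irrefl[OF strict_linear_on_levels[OF w] assms] .
  then show ?thesis unfolding val_le_def val_less_def by (cases a; cases b) auto
qed

definition gap_value :: "((nat \<times> ('b \<Rightarrow> nat)) \<times> int) ext_pt \<Rightarrow> ((nat \<times> ('b \<Rightarrow> nat)) \<times> int) ext_pt \<Rightarrow>
  ('b option \<times> nat) + nat" where
  "gap_value e1 e2 = val_pt (fst (gap_val \<beta> (ext_coords e1) (ext_coords e2))) (snd (gap_val \<beta>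
    (ext_coords e1) (ext_coords e2)))"

lemma ext_coords_High:
  assumes "e \<in> ext_pts Xc"
  shows "0 \<le> ext_coords e High" "ext_coords e High \<le> int m" "e \<noteq> Top \<Longrightarrow> ext_coords e High < int m"
  using assms m1 by (cases e; auto elim!: Z_carrierE)+

lemma ext_coords_Lev_nonneg: "e \<in> ext_pts Xc \<Longrightarrow> e \<noteq> Bot \<Longrightarrow> 0 \<le> ext_coords e (Lev x)"
  by (cases e) (auto simp: coords_def)

lemma ext_coords_Lev_outside: "e \<in> ext_pts Xc \<Longrightarrow> x \<notin> Field \<beta> \<Longrightarrow> ext_coords e (Lev x) = 0"
  using x0F by (cases e) (auto elim!: Z_carrierE simp: fin_supp_def)

lemma finite_ext_coords_Lev: "e \<in> ext_pts Xc \<Longrightarrow> finite {x. ext_coords e (Lev x) \<noteq> 0}"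
  by (cases e) (auto elim!: Z_carrierE simp: fin_supp_def)

lemma val_ok_gap_val:
  assumes e1: "e1 \<in> ext_pts Xc" and e2: "e2 \<in> ext_pts Xc" and e12: "ext_less lt e1 e2"
  shows "val_ok (fst (gap_val \<beta> (ext_coords e1) (ext_coords e2))) (snd (gap_val \<beta> (ext_coords e1)
    (ext_coords e2)))"
proof -
  let ?P = "ext_coords e1" and ?Q = "ext_coords e2"
  have g: "gp_less \<beta> ?P ?Q" using ext_less_iff_gp_less[OF e1 e2] e12 by simp
  define L where "L = top_level \<beta> ?P ?Q"
  have td: "top_diff \<beta> ?P ?Q L" "?P L < ?Q L" using gp_less_top_diff[OF w g] unfolding L_def by auto
  have gv: "gap_val \<beta> ?P ?Q = (L, floor_log2 (nat (?Q L - ?P L)))"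
    using gap_val_top_diff[OF w td(1)] .
  have LV: "L \<in> levels \<beta>" using td unfolding top_diff_def by simp
  have "floor_log2 (nat (?Q L - ?P L)) < val_bound" if LT: "L = High"
  proof -
    have "?Q High - ?P High \<le> int m" using ext_coords_High[OF e1] ext_coords_High[OF e2] by linarith
    then have "nat (?Q L - ?P L) \<le> m" using LT by simp
    moreover have "1 \<le> nat (?Q L - ?P L)" using td by simp
    ultimately have "floor_log2 (nat (?Q L - ?P L)) \<le> floor_log2 m"
      by (rule floor_log2_mono[rotated])
    then show ?thesis by simp
  qed
  then show ?thesis unfolding val_ok_def gv using LV by simp
qed

definition realizable :: "('b level \<Rightarrow> int) \<Rightarrow> bool" where
  "realizable C \<longleftrightarrow> 0 \<le> C High \<and> C High < int m \<and> (\<forall>x. 0 \<le> C (Lev x))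
    \<and> (\<forall>x. x \<notin> Field \<beta> \<longrightarrow> C (Lev x) = 0)
     \<and> finite {x. C (Lev x) \<noteq> 0}"

lemma realizable_coords:
  assumes "realizable C"
  shows "\<exists>c\<in>Xc. coords c = C"
proof -
  define c where "c = ((nat (C High), \<lambda>x. nat (C (Lev x))), C Low)"
  have fs: "(\<lambda>x. nat (C (Lev x))) \<in> fin_supp \<beta>"
  proof -
    have "{x. 0 < C (Lev x)} \<subseteq> {x. C (Lev x) \<noteq> 0}" by auto
    then have "finite {x. 0 < C (Lev x)}"
      using assms unfolding realizable_def by (blast intro: finite_subset)
    then show ?thesis using assms unfolding realizable_def fin_supp_def by simp
  qed
  have cX: "c \<in> Xc" unfolding c_def Z_carrier_iff using assms fs unfolding realizable_def by auto
  have "coords c L = C L" for L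
    using assms unfolding c_def realizable_def by (cases L) auto
  then show ?thesis using cX by blast
qed

lemma level_less_Lev_x0: "level_less \<beta> L (Lev x0) \<Longrightarrow> L = Low"
proof (cases L)
  case (Lev y)
  assume h: "level_less \<beta> L (Lev x0)"
  then have "(y, x0) \<in> \<beta>" "y \<noteq> x0" using Lev by auto
  moreover have "(x0, y) \<in> \<beta>" using x0min FieldI1 calculation(1) by metis
  ultimately show ?thesis using Well_order_antisym[OF w] by blast
qed auto

lemma raise_realizable:
  assumes e: "e \<in> ext_pts Xc" "e \<noteq> Top" and L: "L \<in> levels \<beta>" and t: "t \<ge> 1"
    and bf: "e = Bot \<Longrightarrow> L \<noteq> Low" and top_pt: "L = High \<Longrightarrow> ext_coords e High + t < int m"
  shows "realizable (raise \<beta> (ext_coords e) L t)"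
proof -
  let ?P = "ext_coords e" and ?C = "raise \<beta> (ext_coords e) L t"
  have T: "ext_coords e High \<ge> 0" "ext_coords e High < int m"
    using ext_coords_High[OF e(1)] e(2) by auto
  have CT: "0 \<le> ?C High \<and> ?C High < int m"
  proof (cases "L = High")
    case True
    then show ?thesis using raise_at[OF w L] top_pt T t by simp
  next
    case False
    then have "level_less \<beta> L High" using L by (cases L) auto
    then show ?thesis using raise_above[OF \<open>level_less \<beta> L High\<close>] T by simp
  qed
  have CL: "0 \<le> ?C (Lev x)" for x
  proof (cases "level_less \<beta> L (Lev x)")
    case True
    have "0 \<le> ?P (Lev x)"
    proof (cases "e = Bot")
      case True
      then have "x \<noteq> x0" using bf level_less_Lev_x0 \<open>level_less \<beta> L (Lev x)\<close> by blast
      then show ?thesis using True by simp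
    next
      case False then show ?thesis using ext_coords_Lev_nonneg[OF e(1)] by simp
    qed
    then show ?thesis using raise_above[OF True] by simp
  next
    case False
    show ?thesis
    proof (cases "Lev x = L")
      case True
      have "-1 \<le> ?P (Lev x)" using ext_coords_Lev_nonneg[OF e(1)] by (cases e) auto
      then show ?thesis using raise_at[OF w L] True t by simp
    next
      case ne: False
      then show ?thesis using raise_below[OF False] by simp
    qed
  qed
  show ?thesis
    unfolding realizable_def
    using CT CL raise_Lev_outside[OF L] finite_raise_Lev[OF finite_ext_coords_Lev[OF e(1)]] by blast
qed

lemma top_level_bot_pt:
  assumes e2: "e2 \<in> ext_pts Xc" "e2 \<noteq> Bot" and g: "gp_less \<beta> bot_pt (ext_coords e2)"
  shows "top_level \<beta> bot_pt (ext_coords e2) \<noteq> Low"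
proof
  assume F: "top_level \<beta> bot_pt (ext_coords e2) = Low"
  have "top_diff \<beta> bot_pt (ext_coords e2) Low" using gp_less_top_diff[OF w g] F by simp
  then have ab: "agree_above \<beta> Low bot_pt (ext_coords e2)" unfolding top_diff_def by simp
  have "level_less \<beta> Low (Lev x0)" "Lev x0 \<in> levels \<beta>" using x0F by auto
  then have "bot_pt (Lev x0) = ext_coords e2 (Lev x0)" using ab unfolding agree_above_def by blast
  then show False using ext_coords_Lev_nonneg[OF e2, of x0] by simp
qed


lemma realizable_fun_upd_Low:
  assumes e: "e \<in> ext_pts Xc" "e \<noteq> Bot" "e \<noteq> Top"
  shows "realizable ((ext_coords e)(Low := z))"
  unfolding realizable_def using ext_coords_High[OF e(1)] ext_coords_Lev_nonneg[OF e(1,2)]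
    ext_coords_Lev_outside[OF e(1)] finite_ext_coords_Lev[OF e(1)] e(3)
  by auto

lemma split_point_top_level:
  assumes e1: "e1 \<in> ext_pts Xc" and e2: "e2 \<in> ext_pts Xc" and e12: "ext_less lt e1 e2"
    and gv: "gap_val \<beta> (ext_coords e1) (ext_coords e2) = (L, k)" and n: "n < k"
  obtains C where "realizable C" "gp_less \<beta> (ext_coords e1) C" "gp_less \<beta> C (ext_coords e2)"
    "val_le \<beta> (L, n) (gap_val \<beta> (ext_coords e1) C)"
    "val_le \<beta> (L, n) (gap_val \<beta> C (ext_coords e2))"
proof -
  let ?P = "ext_coords e1" and ?Q = "ext_coords e2"
  have g: "gp_less \<beta> ?P ?Q" using ext_less_iff_gp_less[OF e1 e2] e12 by simp
  have L: "L = top_level \<beta> ?P ?Q" and k: "k = floor_log2 (nat (?Q L - ?P L))"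
    using gv unfolding gap_val_def by auto
  have td: "top_diff \<beta> ?P ?Q L" "?P L < ?Q L" using gp_less_top_diff[OF w g] L by auto
  have LV: "L \<in> levels \<beta>" using td unfolding top_diff_def by simp
  have e1T: "e1 \<noteq> Top" and e2B: "e2 \<noteq> Bot" using e12 by (cases e1; cases e2; simp)+
  define C where "C = raise \<beta> ?P L (2 ^ n)"
  have C: "gp_less \<beta> ?P C \<and> gp_less \<beta> C ?Q \<and> gap_val \<beta> ?P C = (L, n)
    \<and> val_le \<beta> (L, n) (gap_val \<beta> C ?Q)"
    unfolding C_def using gap_val_raise_top_level[OF w g L] n k by simp
  have not_Low: "L \<noteq> Low" if "e1 = Bot"
    using top_level_bot_pt[OF e2 e2B] g that L by simp
  have below_m: "?P High + 2 ^ n < int m" if "L = High"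
  proof -
    have "2 ^ Suc n \<le> nat (?Q L - ?P L)"
      using n k td floor_log2_le_iff[of "nat (?Q L - ?P L)" "Suc n"] by simp
    then have "int (2 ^ Suc n) \<le> ?Q L - ?P L" using td(2) by linarith
    then have "?P High + 2 * 2 ^ n \<le> ?Q High" using that by simp
    moreover have "?Q High \<le> int m" using ext_coords_High[OF e2] by simp
    moreover have "(0::int) < 2 ^ n" by simp
    ultimately show ?thesis by linarith
  qed
  have "realizable C"
    unfolding C_def by (rule raise_realizable[OF e1 e1T LV]) (use not_Low below_m in auto)
  with C show thesis by (intro that[of C]) (auto simp: val_le_def)
qed

lemma split_point_below_top_level:
  assumes e1: "e1 \<in> ext_pts Xc" and e2: "e2 \<in> ext_pts Xc" and e12: "ext_less lt e1 e2"
    and L': "L' \<in> levels \<beta>" "level_less \<beta> L' (top_level \<beta> (ext_coords e1) (ext_coords e2))"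
  obtains C where "realizable C" "gp_less \<beta> (ext_coords e1) C" "gp_less \<beta> C (ext_coords e2)"
    "val_le \<beta> (L', n) (gap_val \<beta> (ext_coords e1) C)"
    "val_le \<beta> (L', n) (gap_val \<beta> C (ext_coords e2))"
proof -
  let ?P = "ext_coords e1" and ?Q = "ext_coords e2"
  define L where "L = top_level \<beta> ?P ?Q"
  have g: "gp_less \<beta> ?P ?Q" using ext_less_iff_gp_less[OF e1 e2] e12 by simp
  have e1T: "e1 \<noteq> Top" and e2B: "e2 \<noteq> Bot" using e12 by (cases e1; cases e2; simp)+
  have L'T: "L' \<noteq> High" using L' by (cases L') auto
  have below_L: "val_le \<beta> (L', n) (gap_val \<beta> ?P ?Q)"
    using L' unfolding gap_val_def val_le_def by simp
  consider (raise) "\<not> (e1 = Bot \<and> L' = Low)" | (lower) "e1 = Bot" "L' = Low" "e2 \<noteq> Top"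
    | (Bot_Top) "e1 = Bot" "L' = Low" "e2 = Top" by blast
  then show thesis
  proof cases
    case raise
    define C where "C = raise \<beta> ?P L' (int (2 ^ n))"
    have C: "gp_less \<beta> ?P C \<and> gp_less \<beta> C ?Q \<and> gap_val \<beta> ?P C = (L', floor_log2 (2 ^ n)) \<and>
        gap_val \<beta> C ?Q = gap_val \<beta> ?P ?Q"
      unfolding C_def using gap_val_raise_below[OF w g L_def L'[folded L_def], of "2 ^ n"] by simp
    have "realizable C"
      unfolding C_def by (rule raise_realizable[OF e1 e1T L'(1)]) (use raise L'T in auto)
    with C below_L show thesis by (intro that[of C]) (auto simp: val_le_def floor_log2_pow)
  next
    case lower
    define C where "C = ?Q(Low := ?Q Low - int (2 ^ n))"
    have "L \<noteq> Low" using L' lower unfolding L_def by auto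
    then have C: "gp_less \<beta> ?P C \<and> gp_less \<beta> C ?Q \<and> gap_val \<beta> C ?Q = (Low, floor_log2 (2 ^ n)) \<and>
        gap_val \<beta> ?P C = gap_val \<beta> ?P ?Q"
      unfolding C_def using gap_val_lower_Low[OF w g L_def _, of "2 ^ n"] by simp
    have "realizable C" unfolding C_def using realizable_fun_upd_Low[OF e2 e2B lower(3)] .
    with C below_L lower show thesis by (intro that[of C]) (auto simp: val_le_def floor_log2_pow)
  next
    case Bot_Top
    have "top_diff \<beta> bot_pt top_pt High" unfolding top_diff_def agree_above_def using m1 by simp
    then have "L = High" unfolding L_def using top_level_eq[OF w] Bot_Top by simp
    then have x0: "Lev x0 \<in> levels \<beta>" "level_less \<beta> (Lev x0) L" using x0F by simp_all
    define C where "C = raise \<beta> ?P (Lev x0) (int 1)"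
    have C: "gp_less \<beta> ?P C \<and> gp_less \<beta> C ?Q \<and> gap_val \<beta> ?P C = (Lev x0, floor_log2 1) \<and>
        gap_val \<beta> C ?Q = gap_val \<beta> ?P ?Q"
      unfolding C_def using gap_val_raise_below[OF w g L_def x0, of 1] by simp
    have "realizable C" unfolding C_def by (rule raise_realizable[OF e1 e1T x0(1)]) auto
    with C below_L Bot_Top x0F show thesis by (intro that[of C]) (auto simp: val_le_def)
  qed
qed

lemma gap_val_split_iff:
  assumes e1: "e1 \<in> ext_pts Xc" and e2: "e2 \<in> ext_pts Xc" and e12: "ext_less lt e1 e2"
    and L': "L' \<in> levels \<beta>"
  shows "val_less \<beta> (L', n) (gap_val \<beta> (ext_coords e1) (ext_coords e2)) \<longleftrightarrow>
    (\<exists>c\<in>Xc. between lt e1 c e2 \<and> val_le \<beta> (L', n) (gap_val \<beta> (ext_coords e1) (coords c)) \<and>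
      val_le \<beta> (L', n) (gap_val \<beta> (coords c) (ext_coords e2)))"
proof
  assume less: "val_less \<beta> (L', n) (gap_val \<beta> (ext_coords e1) (ext_coords e2))"
  obtain C where C: "realizable C" "gp_less \<beta> (ext_coords e1) C" "gp_less \<beta> C (ext_coords e2)"
    "val_le \<beta> (L', n) (gap_val \<beta> (ext_coords e1) C)"
    "val_le \<beta> (L', n) (gap_val \<beta> C (ext_coords e2))"
  proof (cases "gap_val \<beta> (ext_coords e1) (ext_coords e2)")
    case (Pair L k)
    show thesis
    proof (cases "L' = L")
      case True
      with less Pair L' have "n < k"
        using strict_linear_on_irrefl[OF strict_linear_on_levels[OF w]]
          unfolding val_less_def by auto
      from split_point_top_level[OF e1 e2 e12 Pair this] that True show thesis by blast
    next
      case False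
      with less Pair have "level_less \<beta> L' (top_level \<beta> (ext_coords e1) (ext_coords e2))"
        unfolding val_less_def gap_val_def by auto
      from split_point_below_top_level[OF e1 e2 e12 L'(1) this] that show thesis by blast
    qed
  qed
  obtain c where "c \<in> Xc" "coords c = C" using realizable_coords[OF C(1)] by blast
  with C e1 e2 show "\<exists>c\<in>Xc. between lt e1 c e2
    \<and> val_le \<beta> (L', n) (gap_val \<beta> (ext_coords e1) (coords c)) \<and>
      val_le \<beta> (L', n) (gap_val \<beta> (coords c) (ext_coords e2))"
    using ext_less_iff_gp_less[of e1 "Pt c"] ext_less_iff_gp_less[of "Pt c" e2] by auto
next
  assume "\<exists>c\<in>Xc. between lt e1 c e2 \<and> val_le \<beta> (L', n) (gap_val \<beta> (ext_coords e1) (coords c)) \<and>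
      val_le \<beta> (L', n) (gap_val \<beta> (coords c) (ext_coords e2))"
  then obtain c where c: "c \<in> Xc" "between lt e1 c e2"
    "val_le \<beta> (L', n) (gap_val \<beta> (ext_coords e1) (coords c))"
    "val_le \<beta> (L', n) (gap_val \<beta> (coords c) (ext_coords e2))"
    by blast
  then have "gp_less \<beta> (ext_coords e1) (coords c)" "gp_less \<beta> (coords c) (ext_coords e2)"
    using e1 e2 ext_less_iff_gp_less[of e1 "Pt c"] ext_less_iff_gp_less[of "Pt c" e2] by auto
  with c L' show "val_less \<beta> (L', n) (gap_val \<beta> (ext_coords e1) (ext_coords e2))"
    using val_less_gap_val_split[OF w] by simp
qed

lemma gap_value_split:
  assumes e1: "e1 \<in> ext_pts Xc" and e2: "e2 \<in> ext_pts Xc" and e12: "ext_less lt e1 e2"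
    and u: "u \<in> Field Vals"
  shows "(u, gap_value e1 e2) \<in> Vals \<and> u \<noteq> gap_value e1 e2 \<longleftrightarrow>
       (\<exists>c\<in>Xc. between lt e1 c e2 \<and> (u, gap_value e1 (Pt c)) \<in> Vals
         \<and> (u, gap_value (Pt c) e2) \<in> Vals)"
proof -
  obtain L' n where ok: "val_ok L' n" and u: "u = val_pt L' n" using Field_ValsE[OF u] by blast
  have cmp: "(u, gap_value d1 d2) \<in> Vals
    \<longleftrightarrow> val_le \<beta> (L', n) (gap_val \<beta> (ext_coords d1) (ext_coords d2))"
    if "d1 \<in> ext_pts Xc" "d2 \<in> ext_pts Xc" "ext_less lt d1 d2" for d1 d2
    using val_pt_le_iff[OF ok val_ok_gap_val[OF that]] unfolding u gap_value_def by simp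
  have "(u, gap_value e1 e2) \<in> Vals \<and> u \<noteq> gap_value e1 e2 \<longleftrightarrow>
      val_less \<beta> (L', n) (gap_val \<beta> (ext_coords e1) (ext_coords e2))"
    using cmp[OF e1 e2 e12] val_le_val_less[of "(L', n)"] ok
    unfolding u gap_value_def val_ok_def by (auto simp: val_pt_inj prod_eq_iff)
  also have "\<dots> \<longleftrightarrow> (\<exists>c\<in>Xc. between lt e1 c e2 \<and> (u, gap_value e1 (Pt c)) \<in> Vals
    \<and> (u, gap_value (Pt c) e2) \<in> Vals)"
    unfolding gap_val_split_iff[OF e1 e2 e12 ok[unfolded val_ok_def, THEN conjunct1]]
    using cmp[OF e1] cmp[OF _ e2] by auto
  finally show ?thesis .
qed

lemma gap_value_Bot_Top: "gap_value Bot Top = Inr (floor_log2 m)"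
proof -
  have tdt: "top_diff \<beta> bot_pt top_pt High" unfolding top_diff_def agree_above_def using m1 by simp
  have "gap_val \<beta> bot_pt top_pt = (High, floor_log2 (nat (top_pt High - bot_pt High)))"
    using gap_val_top_diff[OF w tdt] .
  then show ?thesis unfolding gap_value_def by simp
qed

lemma infinite_UNIV_points: "infinite (UNIV :: ((nat \<times> ('b \<Rightarrow> nat)) \<times> int) set)"
  by (simp add: finite_prod)

lemma empty_in_rank_levels_iff:
  assumes w0: "w0 \<in> Field Vals"
  shows "{} \<in> rank_levels Xc lt Vals w0 \<longleftrightarrow> (w0, Inr (floor_log2 m)) \<in> Vals"
proof -
  have VF: "gap_value e1 e2 \<in> Field Vals"
    if "e1 \<in> ext_pts Xc" "e2 \<in> ext_pts Xc" "ext_less lt e1 e2" for e1 e2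
    unfolding gap_value_def using val_pt_in_Field[OF val_ok_gap_val[OF that]] .
  have "{} \<in> rank_levels Xc lt Vals w0
    \<longleftrightarrow> {} \<in> age Xc \<and> (\<forall>e1 e2. (e1, e2) \<in> gaps lt {} \<longrightarrow> (w0, gap_value e1 e2) \<in> Vals)"
    by (rule rank_levels_iff_gaps[OF strict_linear_on_X infinite_UNIV_points Well_order_Vals VF
      gap_value_split w0])
  moreover have "{} \<in> age Xc" unfolding age_def by simp
  ultimately show ?thesis unfolding gaps_empty by (simp add: gap_value_Bot_Top)
qed

end

theorem theorem6p19:
  fixes \<beta> :: "'b rel" and m :: nat
  assumes "Well_order \<beta>" and "countable (Field \<beta>)" and "Field \<beta> \<noteq> {}"
    and "m \<ge> 1"
  shows "rank_of_is (Z_carrier (ord_times_nat (omega_exp \<beta>) m))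
                    (Z_less (ord_times_nat (omega_exp \<beta>) m))
                    (ord_plus_nat (omega_times (one_plus \<beta>)) (nat \<lfloor>log 2 (real m)\<rfloor>))"
proof -
  let ?x0 = "wo_rel.minim \<beta> (Field \<beta>)"
  interpret Z_omega_exp_copies \<beta> m ?x0
    using assms wo_rel.minim_inField[of \<beta> "Field \<beta>"] wo_rel.minim_least[of \<beta> "Field \<beta>"]
    by unfold_locales (auto simp: wo_rel_def)
  let ?top = "Inr (floor_log2 m)"
  have "rank_is Xc lt {} (Restr Vals (underS Vals ?top))"
  proof (rule rank_is_underS[OF Well_order_Vals])
    show "countable (Field Vals)"
      using countable_Field_ord_plus_nat_omega_times_one_plus[OF assms(1,2)] .
    show "is_pred Vals ?top (Inr (Suc (floor_log2 m)))"
      by (rule is_pred_ord_plus_nat_Inr) simp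
    have "?top \<in> Field Vals" "Inr (Suc (floor_log2 m)) \<in> Field Vals"
      unfolding Field_Vals by auto
    from empty_in_rank_levels_iff[OF this(1)] empty_in_rank_levels_iff[OF this(2)]
    show "{} \<in> rank_levels Xc lt Vals ?top" "{} \<notin> rank_levels Xc lt Vals (Inr (Suc (floor_log2 m)))"
      by simp_all
  qed
  moreover have "Restr Vals (underS Vals ?top) =
      ord_plus_nat (omega_times (one_plus \<beta>)) (floor_log2 m)"
    by (rule Restr_ord_plus_nat_underS)
      (simp_all add: Well_order_omega_times Well_order_one_plus assms(1))
  ultimately show ?thesis
    unfolding rank_of_is_def floor_log2_def by simp
qed

end
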